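(* Let $\|\cdot\|$ be a norm on $\mathbb{C}^n$, differentiable (away from $0$), such that $\|(x_1,\dots,x_n)\|\le\|(x_1,\dots,x_n)\|_{\ell^1_n}$ and $\|(x_1,\dots,x_n)\|=\|(|x_1|,\dots,|x_n|)\|$ for all $x_1,\dots,x_n\in\mathbb{C}$. Then for absolutely continuous functions $f_1,\dots,f_n:\mathbb{T}\to\mathbb{C}$, \[\mathrm{Ber}\,\|(f_1,\dots,f_n)\|\le\|(\mathrm{Ber}f_1,\dots,\mathrm{Ber}f_n)\|_*,\] where $\|v\|_*=\sup_{\|w\|=1}|\langle v,w\rangle|$ is the dual norm.
   Context: $\mathbb{T}=\mathbb{R}/2\pi\mathbb{Z}$ with normalized Lebesgue measure, $\mathbb{E}$ the integral. For an absolutely continuous $f:\mathbb{T}\to\mathbb{C}$, $\mathrm{Ber}f=\mathbb{E}|f'|/\mathbb{E}|f|$. $\|(f_1,\dots,f_n)\|$ denotes the function $t\mapsto\|(f_1(t),\dots,f_n(t))\|$. *)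

theory Defs
  imports "HOL-Analysis.Analysis"
begin

text \<open>The circle T = R/2piZ is modelled by 2pi-periodic functions on the reals;
  the normalized Lebesgue measure gives the expectation below.\<close>

definition periodic2pi :: "(real \<Rightarrow> 'a) \<Rightarrow> bool" where
  "periodic2pi f \<longleftrightarrow> (\<forall>t. f (t + 2 * pi) = f t)"

definition abs_cont_on :: "real \<Rightarrow> real \<Rightarrow> (real \<Rightarrow> 'a::real_normed_vector) \<Rightarrow> bool" where
  "abs_cont_on a b f \<longleftrightarrow>
     (\<forall>\<epsilon>>0. \<exists>\<delta>>0. \<forall>(n::nat) (I::nat \<Rightarrow> real \<times> real).
        (\<forall>k<n. a \<le> fst (I k) \<and> fst (I k) \<le> snd (I k) \<and> snd (I k) \<le> b) \<and>
        (\<forall>j<n. \<forall>k<n. j \<noteq> k \<longrightarrow>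
            {fst (I j)<..<snd (I j)} \<inter> {fst (I k)<..<snd (I k)} = {}) \<and>
        (\<Sum>k<n. snd (I k) - fst (I k)) < \<delta>
        \<longrightarrow> (\<Sum>k<n. norm (f (snd (I k)) - f (fst (I k)))) < \<epsilon>)"

definition abs_cont_T :: "(real \<Rightarrow> 'a::real_normed_vector) \<Rightarrow> bool" where
  "abs_cont_T f \<longleftrightarrow> periodic2pi f \<and> abs_cont_on 0 (2 * pi) f"

definition ET :: "(real \<Rightarrow> real) \<Rightarrow> real" where
  "ET g = integral {0..2 * pi} g / (2 * pi)"

definition Ber :: "(real \<Rightarrow> 'a::real_normed_vector) \<Rightarrow> real" where
  "Ber f = ET (\<lambda>t. norm (vector_derivative f (at t))) / ET (\<lambda>t. norm (f t))"

definition dual_norm :: "(complex ^ 'n \<Rightarrow> real) \<Rightarrow> complex ^ 'n \<Rightarrow> real" where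
  "dual_norm N v = Sup {cmod (\<Sum>i\<in>UNIV. v $ i * cnj (w $ i)) | w. N w = 1}"

end

theory Submission
  imports Defs
begin

(*
  Put g = N(f_1, ..., f_n) and a = (E|f_1|, ..., E|f_n|).  Since N is a norm dominated by the
  l^1 norm, |g s - g t| <= sum_i |f_i s - f_i t|; hence g is absolutely continuous and
  |g'| <= sum_i |f_i'| almost everywhere, so E|g'| <= sum_i E|f_i'|.  Since N(x) = N(|x|), Jensen's
  inequality for the convex function N gives N(a) <= E g.  Testing the dual norm with w = a / N(a)
  gives <(Ber f_i)_i, w> = sum_i E|f_i'| / N(a) >= E|g'| / E g = Ber g.

  Almost-everywhere differentiability of absolutely continuous functions, with integrable
  derivative, comes from the Jordan decomposition of a real absolutely continuous function into
  continuous monotone functions (its variation function and the variation minus the function)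
  and Lebesgue's theorem that a continuous monotone function is differentiable almost everywhere,
  which rests on the Vitali covering theorem.
*)

section \<open>Null sets via Vitali covers\<close>

lemma negligible_if_outer_contraction:
  fixes E :: "real set"
  assumes bnd: "E \<subseteq> T0" "T0 \<in> lmeasurable" and c: "0 \<le> c" "c < 1"
    and contract: "\<And>U. open U \<Longrightarrow> E \<subseteq> U \<Longrightarrow> U \<in> lmeasurable \<Longrightarrow>
          \<exists>T. E \<subseteq> T \<and> T \<in> lmeasurable \<and> measure lebesgue T \<le> c * measure lebesgue U"
  shows "negligible E"
proof -
  define M where "M = {measure lebesgue T | T. E \<subseteq> T \<and> T \<in> lmeasurable}"
  have M_ne: "M \<noteq> {}" using bnd unfolding M_def by blast
  have M_bdd: "bdd_below M" unfolding M_def by (rule bdd_belowI[of _ 0]) auto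
  define s where "s = Inf M"
  have s_nonneg: "0 \<le> s" unfolding s_def using M_ne by (rule cInf_greatest) (auto simp: M_def)
  have "s \<le> c * s + e" if e: "e > 0" for e
  proof -
    have "Inf M < s + e / 2" using e s_def by simp
    then obtain T1 where T1: "E \<subseteq> T1" "T1 \<in> lmeasurable" "measure lebesgue T1 < s + e / 2"
      using cInf_lessD[OF M_ne] unfolding M_def by blast
    obtain U where U: "open U" "T1 \<subseteq> U" "U - T1 \<in> lmeasurable" "emeasure lebesgue (U - T1) < ennreal (e / 2)"
      using sets_lebesgue_outer_open[of T1 "e / 2"] T1(2) e by (auto simp: fmeasurable_def)
    have U_eq: "U = T1 \<union> (U - T1)" using U by blast
    have U_lm: "U \<in> lmeasurable" using U(3) T1(2) by (subst U_eq) (rule fmeasurable.Un)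
    have "measure lebesgue (U - T1) < e / 2"
      using U(3,4) e by (simp add: emeasure_eq_measure2 ennreal_less_iff)
    moreover have "measure lebesgue U \<le> measure lebesgue T1 + measure lebesgue (U - T1)"
      using T1(2) U(3) by (subst U_eq) (rule measure_Un_le, auto)
    ultimately have U_small: "measure lebesgue U \<le> s + e" using T1 by linarith
    obtain T where T: "E \<subseteq> T" "T \<in> lmeasurable" "measure lebesgue T \<le> c * measure lebesgue U"
      using contract[OF U(1) _ U_lm] T1(1) U(2) by blast
    have "s \<le> measure lebesgue T" unfolding s_def using M_bdd T by (intro cInf_lower) (auto simp: M_def)
    also have "\<dots> \<le> c * (s + e)" using T(3) U_small c by (meson mult_left_mono order_trans)
    also have "\<dots> \<le> c * s + e" using c e by (simp add: distrib_left)
    finally show ?thesis .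
  qed
  then have "s \<le> c * s" by (rule field_le_epsilon)
  with s_nonneg c have s: "s = 0" by (smt (verit) mult_le_cancel_right1)
  show ?thesis
    unfolding negligible_outer
  proof (intro allI impI)
    fix e :: real assume "e > 0"
    then obtain m where "m \<in> M" "m < e" using cInf_lessD[OF M_ne] s s_def by auto
    then show "\<exists>T. E \<subseteq> T \<and> T \<in> lmeasurable \<and> measure lebesgue T < e"
      unfolding M_def by blast
  qed
qed

lemma emeasure_interval_measure_cball:
  fixes F :: "real \<Rightarrow> real"
  assumes "mono F" "continuous_on UNIV F" "0 \<le> r"
  shows "emeasure (interval_measure F) (cball c r) = ennreal (F (c + r) - F (c - r))"
  using emeasure_interval_measure_Icc[of "c - r" "c + r" F] assms
  by (simp add: cball_eq_atLeastAtMost monoD)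

lemma emeasure_lborel_cball_real: "0 \<le> r \<Longrightarrow> emeasure lborel (cball (c::real) r) = ennreal (2 * r)"
  by (simp add: cball_eq_atLeastAtMost)

lemma emeasure_UN_disjoint_cballs_le:
  fixes M1 M2 :: "real measure"
  assumes "sets M1 = sets borel" "sets M2 = sets borel" "countable C"
    and disj: "pairwise (\<lambda>i j. disjnt (cball (fst i) (snd i)) (cball (fst j) (snd j))) C"
    and le: "\<And>i. i \<in> C \<Longrightarrow>
      c1 * emeasure M1 (cball (fst i) (snd i)) \<le> c2 * emeasure M2 (cball (fst i) (snd i))"
  shows "c1 * emeasure M1 (\<Union>i\<in>C. cball (fst i) (snd i)) \<le> c2 * emeasure M2 (\<Union>i\<in>C. cball (fst i) (snd i))"
proof -
  have df: "disjoint_family_on (\<lambda>i. cball (fst i) (snd i)) C"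
    using disj by (auto simp: disjoint_family_on_def pairwise_def disjnt_def)
  have "c1 * emeasure M1 (\<Union>i\<in>C. cball (fst i) (snd i))
        = (\<integral>\<^sup>+i. c1 * emeasure M1 (cball (fst i) (snd i)) \<partial>count_space C)"
    using emeasure_UN_countable[OF _ \<open>countable C\<close> df, of M1] assms(1) by (simp add: nn_integral_cmult)
  also have "\<dots> \<le> (\<integral>\<^sup>+i. c2 * emeasure M2 (cball (fst i) (snd i)) \<partial>count_space C)"
    by (rule nn_integral_mono) (use le in auto)
  also have "\<dots> = c2 * emeasure M2 (\<Union>i\<in>C. cball (fst i) (snd i))"
    using emeasure_UN_countable[OF _ \<open>countable C\<close> df, of M2] assms(2) by (simp add: nn_integral_cmult)
  finally show ?thesis .
qed

lemma Vitali_cover_in_open: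
  fixes U E :: "real set"
  assumes "open U" "E \<subseteq> U"
    and fine: "\<And>x d. x \<in> E \<Longrightarrow> d > 0 \<Longrightarrow> \<exists>c r. 0 < r \<and> r < d \<and> x \<in> cball c r \<and> P c r"
  obtains C where "countable C"
    "\<And>i. i \<in> C \<Longrightarrow> 0 < snd i \<and> cball (fst i) (snd i) \<subseteq> U \<and> P (fst i) (snd i)"
    "pairwise (\<lambda>i j. disjnt (cball (fst i) (snd i)) (cball (fst j) (snd j))) C"
    "negligible (E - (\<Union>i\<in>C. cball (fst i) (snd i)))"
proof -
  define K where "K = {i. 0 < snd i \<and> cball (fst i) (snd i) \<subseteq> U \<and> P (fst i) (snd i)}"
  have fine_K: "\<exists>i. i \<in> K \<and> x \<in> cball (fst i) (snd i) \<and> snd i < d" if "x \<in> E" "0 < d" for x d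
  proof -
    obtain e where e: "e > 0" "ball x e \<subseteq> U" using assms(1,2) \<open>x \<in> E\<close> open_contains_ball by blast
    obtain c r where cr: "0 < r" "r < min d (e / 2)" "x \<in> cball c r" "P c r"
      using fine[OF \<open>x \<in> E\<close>, of "min d (e / 2)"] \<open>0 < d\<close> e(1) by auto
    have "cball c r \<subseteq> ball x e" using cr(2,3) by (auto simp: dist_real_def)
    then show ?thesis using cr e(2) by (intro exI[of _ "(c, r)"]) (auto simp: K_def)
  qed
  obtain C where C: "countable C" "C \<subseteq> K"
    "pairwise (\<lambda>i j. disjnt (cball (fst i) (snd i)) (cball (fst j) (snd j))) C"
    "negligible (E - (\<Union>i\<in>C. cball (fst i) (snd i)))"
    by (rule Vitali_covering_theorem_cballs[of K snd E fst, OF _ fine_K]) (auto simp: K_def)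
  show ?thesis by (rule that[OF C(1) _ C(3,4)]) (use C(2) in \<open>auto simp: K_def\<close>)
qed

lemma negligible_Diff_UN_balls:
  fixes E :: "real set"
  assumes "countable C" "negligible (E - (\<Union>i\<in>C. cball (fst i) (snd i)))"
  shows "negligible (E - (\<Union>i\<in>C. ball (fst i) (snd i)))"
proof -
  have "E - (\<Union>i\<in>C. ball (fst i) (snd i)) \<subseteq>
        (E - (\<Union>i\<in>C. cball (fst i) (snd i))) \<union> (\<Union>i\<in>C. {fst i - snd i, fst i + snd i})"
    by (force simp: dist_real_def)
  moreover have "negligible (\<Union>i\<in>C. {fst i - snd i, fst i + snd i})"
    using assms(1) by (intro negligible_countable_Union) auto
  ultimately show ?thesis using assms(2) by (meson negligible_Un negligible_subset)
qed

definition slope_below :: "(real \<Rightarrow> real) \<Rightarrow> real \<Rightarrow> real set" where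
  "slope_below F p =
     {x. \<forall>d>0. \<exists>c r. 0 < r \<and> r < d \<and> x \<in> cball c r \<and> F (c + r) - F (c - r) < p * (2 * r)}"

definition slope_above :: "(real \<Rightarrow> real) \<Rightarrow> real \<Rightarrow> real set" where
  "slope_above F q =
     {x. \<forall>d>0. \<exists>c r. 0 < r \<and> r < d \<and> x \<in> cball c r \<and> q * (2 * r) < F (c + r) - F (c - r)}"

lemma slope_below_cover:
  fixes F :: "real \<Rightarrow> real"
  assumes mono: "mono F" and cont: "continuous_on UNIV F" and p: "p > 0"
    and U: "open U" "E \<subseteq> U" and E: "E \<subseteq> slope_below F p"
  obtains W where "open W" "W \<subseteq> U" "negligible (E - W)"
    "emeasure (interval_measure F) W \<le> ennreal p * emeasure lborel U"
proof -
  obtain C where C: "countable C"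
      "\<And>i. i \<in> C \<Longrightarrow> 0 < snd i \<and> cball (fst i) (snd i) \<subseteq> U \<and>
             F (fst i + snd i) - F (fst i - snd i) < p * (2 * snd i)"
      "pairwise (\<lambda>i j. disjnt (cball (fst i) (snd i)) (cball (fst j) (snd j))) C"
      "negligible (E - (\<Union>i\<in>C. cball (fst i) (snd i)))"
    by (rule Vitali_cover_in_open[OF U, where P = "\<lambda>c r. F (c + r) - F (c - r) < p * (2 * r)"])
      (use E in \<open>auto simp: slope_below_def\<close>)
  define W where "W = (\<Union>i\<in>C. ball (fst i) (snd i))"
  define B where "B = (\<Union>i\<in>C. cball (fst i) (snd i))"
  have "W \<subseteq> U" using C(2) by (fastforce simp: W_def)
  moreover have "negligible (E - W)"
    unfolding W_def using C(1,4) by (rule negligible_Diff_UN_balls)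
  moreover have "emeasure (interval_measure F) W \<le> ennreal p * emeasure lborel U"
  proof -
    have "emeasure (interval_measure F) W \<le> 1 * emeasure (interval_measure F) B"
      using C(1) by (auto intro!: emeasure_mono simp: W_def B_def sets.countable_UN'')
    also have "\<dots> \<le> ennreal p * emeasure lborel B"
      unfolding B_def
    proof (rule emeasure_UN_disjoint_cballs_le[OF _ _ C(1) C(3)])
      fix i assume "i \<in> C"
      then have i: "0 < snd i" "F (fst i + snd i) - F (fst i - snd i) < p * (2 * snd i)"
        using C(2) by auto
      then show "1 * emeasure (interval_measure F) (cball (fst i) (snd i))
                 \<le> ennreal p * emeasure lborel (cball (fst i) (snd i))"
        using p by (simp add: emeasure_interval_measure_cball[OF mono cont] emeasure_lborel_cball_real
            ennreal_mult[symmetric] ennreal_leI)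
    qed auto
    also have "\<dots> \<le> ennreal p * emeasure lborel U"
      using C(2) U(1) by (intro mult_left_mono emeasure_mono) (auto simp: B_def)
    finally show ?thesis .
  qed
  ultimately show ?thesis using that[of W] by (auto simp: W_def)
qed

lemma slope_above_cover:
  fixes F :: "real \<Rightarrow> real"
  assumes mono: "mono F" and cont: "continuous_on UNIV F" and q: "q > 0"
    and U: "open U" "E \<subseteq> U" and E: "E \<subseteq> slope_above F q"
  obtains T where "E \<subseteq> T" "T \<in> sets lebesgue"
    "ennreal q * emeasure lebesgue T \<le> emeasure (interval_measure F) U"
proof -
  obtain C where C: "countable C"
      "\<And>i. i \<in> C \<Longrightarrow> 0 < snd i \<and> cball (fst i) (snd i) \<subseteq> U \<and>
             q * (2 * snd i) < F (fst i + snd i) - F (fst i - snd i)"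
      "pairwise (\<lambda>i j. disjnt (cball (fst i) (snd i)) (cball (fst j) (snd j))) C"
      "negligible (E - (\<Union>i\<in>C. cball (fst i) (snd i)))"
    by (rule Vitali_cover_in_open[OF U, where P = "\<lambda>c r. q * (2 * r) < F (c + r) - F (c - r)"])
      (use E in \<open>auto simp: slope_above_def\<close>)
  define B where "B = (\<Union>i\<in>C. cball (fst i) (snd i))"
  have B_borel: "B \<in> sets borel" unfolding B_def using C(1) by (simp add: sets.countable_UN'')
  have "B \<in> sets lebesgue" using B_borel by (metis sets_completionI_sets sets_lborel)
  moreover have "E - B \<in> sets lebesgue" using C(4) by (auto simp: B_def intro!: negligible_imp_sets)
  ultimately have "B \<union> (E - B) \<in> sets lebesgue" by (rule sets.Un)
  moreover have "ennreal q * emeasure lebesgue (B \<union> (E - B)) \<le> emeasure (interval_measure F) U"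
  proof -
    have "emeasure lebesgue (B \<union> (E - B)) = emeasure lborel B"
      using B_borel C(4) by (subst emeasure_Un_null_set)
        (auto simp: B_def negligible_iff_null_sets emeasure_completion main_part_sets)
    then have "ennreal q * emeasure lebesgue (B \<union> (E - B)) = ennreal q * emeasure lborel B" by simp
    also have "\<dots> \<le> 1 * emeasure (interval_measure F) B"
      unfolding B_def
    proof (rule emeasure_UN_disjoint_cballs_le[OF _ _ C(1) C(3)])
      fix i assume "i \<in> C"
      then have i: "0 < snd i" "q * (2 * snd i) < F (fst i + snd i) - F (fst i - snd i)"
        using C(2) by auto
      then show "ennreal q * emeasure lborel (cball (fst i) (snd i))
                 \<le> 1 * emeasure (interval_measure F) (cball (fst i) (snd i))"
        using q by (simp add: emeasure_interval_measure_cball[OF mono cont] emeasure_lborel_cball_real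
            ennreal_mult[symmetric] ennreal_leI)
    qed auto
    also have "\<dots> \<le> emeasure (interval_measure F) U"
      using C(2) U(1) by (auto intro!: emeasure_mono simp: B_def)
    finally show ?thesis .
  qed
  ultimately show ?thesis using that[of "B \<union> (E - B)"] by blast
qed

lemma lmeasurable_if_scaled_emeasure_le:
  assumes "T \<in> sets lebesgue" "q > 0" "0 \<le> M" "ennreal q * emeasure lebesgue T \<le> ennreal M"
  shows "T \<in> lmeasurable" "q * measure lebesgue T \<le> M"
proof -
  have "emeasure lebesgue T \<noteq> \<infinity>"
  proof
    assume "emeasure lebesgue T = \<infinity>"
    then have "ennreal q * emeasure lebesgue T = \<infinity>" using assms(2) by (simp add: ennreal_mult_top)
    with assms(4) show False by (simp add: top_unique)
  qed
  then show T_lm: "T \<in> lmeasurable" using assms(1) by (simp add: fmeasurable_def top.not_eq_extremum)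
  have "ennreal (q * measure lebesgue T) \<le> ennreal M"
    using assms(2,4) emeasure_eq_measure2[OF T_lm] by (simp add: ennreal_mult)
  then show "q * measure lebesgue T \<le> M" using assms(3) by (subst (asm) ennreal_le_iff) auto
qed

lemma negligible_slope_below_Int_above:
  fixes F :: "real \<Rightarrow> real"
  assumes mono: "mono F" and cont: "continuous_on UNIV F" and pq: "0 < p" "p < q"
    and E: "E \<subseteq> slope_below F p" "E \<subseteq> slope_above F q" "bounded E"
  shows "negligible E"
proof -
  obtain c R where R: "E \<subseteq> cball c R" using E(3) unfolding bounded_subset_cball by blast
  show ?thesis
  proof (rule negligible_if_outer_contraction[OF R])
    show "cball c R \<in> lmeasurable" by (rule lmeasurable_cball)
    show "0 \<le> p / q" "p / q < 1" using pq by auto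
    fix U assume U: "open U" "E \<subseteq> U" "U \<in> lmeasurable"
    obtain W where W: "open W" "W \<subseteq> U" "negligible (E - W)"
        "emeasure (interval_measure F) W \<le> ennreal p * emeasure lborel U"
      using slope_below_cover[OF mono cont pq(1) U(1,2) E(1)] .
    obtain T where T: "E \<inter> W \<subseteq> T" "T \<in> sets lebesgue"
        "ennreal q * emeasure lebesgue T \<le> emeasure (interval_measure F) W"
      by (rule slope_above_cover[OF mono cont _ W(1), of q "E \<inter> W"]) (use pq E(2) in auto)
    have T'_sets: "T \<union> (E - W) \<in> sets lebesgue"
      using T(2) negligible_imp_sets[OF W(3)] by (rule sets.Un)
    have "emeasure lebesgue (T \<union> (E - W)) = emeasure lebesgue T"
      using T(2) W(3) by (intro emeasure_Un_null_set) (simp_all add: negligible_iff_null_sets)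
    moreover have "emeasure lborel U = emeasure lebesgue U"
      using U(1) by (simp add: emeasure_completion main_part_sets)
    moreover have "emeasure lebesgue U = ennreal (measure lebesgue U)"
      using U(3) by (rule emeasure_eq_measure2)
    ultimately have "ennreal q * emeasure lebesgue (T \<union> (E - W)) \<le> ennreal (p * measure lebesgue U)"
      using order_trans[OF T(3) W(4)] pq by (simp add: ennreal_mult)
    from lmeasurable_if_scaled_emeasure_le[OF T'_sets _ _ this] pq
    have "T \<union> (E - W) \<in> lmeasurable" "q * measure lebesgue (T \<union> (E - W)) \<le> p * measure lebesgue U"
      by auto
    moreover from this(2) pq have "measure lebesgue (T \<union> (E - W)) \<le> p / q * measure lebesgue U"
      by (simp add: field_simps)
    ultimately show "\<exists>T. E \<subseteq> T \<and> T \<in> lmeasurable \<and> measure lebesgue T \<le> p / q * measure lebesgue U"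
      using T(1) by (intro exI[of _ "T \<union> (E - W)"]) auto
  qed
qed

lemma negligible_slope_above_all:
  fixes F :: "real \<Rightarrow> real"
  assumes mono: "mono F" and cont: "continuous_on UNIV F"
    and E: "\<And>n::nat. E \<subseteq> slope_above F (real n)" "bounded E"
  shows "negligible E"
  unfolding negligible_outer_le
proof (intro allI impI)
  fix e :: real assume e: "e > 0"
  obtain R where R: "R > 0" "E \<subseteq> ball 0 R" using E(2) bounded_pos_less by (force simp: subset_eq)
  define M where "M = F R - F (- R)"
  have "F (- R) \<le> F R" using mono R(1) by (simp add: monoD)
  then have M_nonneg: "0 \<le> M" by (simp add: M_def)
  have "emeasure (interval_measure F) (ball 0 R) \<le> emeasure (interval_measure F) (cball 0 R)"
    by (rule emeasure_mono) auto
  also have "\<dots> = ennreal M"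
    using emeasure_interval_measure_cball[OF mono cont, of R 0] R(1) by (simp add: M_def)
  finally have M: "emeasure (interval_measure F) (ball 0 R) \<le> ennreal M" .
  obtain n :: nat where n: "M / e < real n" using reals_Archimedean2 by blast
  have n_pos: "real n > 0" using n M_nonneg e by (meson divide_nonneg_pos le_less_trans)
  obtain T where T: "E \<subseteq> T" "T \<in> sets lebesgue"
      "ennreal (real n) * emeasure lebesgue T \<le> emeasure (interval_measure F) (ball 0 R)"
    using slope_above_cover[OF mono cont n_pos _ R(2) E(1)] by auto
  have "T \<in> lmeasurable" and nT: "real n * measure lebesgue T \<le> M"
    using lmeasurable_if_scaled_emeasure_le[OF T(2) n_pos M_nonneg order_trans[OF T(3) M]] by auto
  moreover have "M < real n * e" using n e by (simp add: field_simps)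
  then have "real n * measure lebesgue T \<le> real n * e" using nT by linarith
  then have "measure lebesgue T \<le> e" using n_pos by simp
  ultimately show "\<exists>T. E \<subseteq> T \<and> T \<in> lmeasurable \<and> measure lebesgue T \<le> e"
    using T(1) by blast
qed

section \<open>Lebesgue's theorem for continuous monotone functions\<close>

lemma tendsto_if_cauchy_filtermap:
  fixes G :: "'a \<Rightarrow> 'b::complete_space"
  assumes "cauchy_filter (filtermap G F)" "F \<noteq> bot"
  obtains L where "(G \<longlongrightarrow> L) F"
proof -
  have "filtermap G F \<noteq> bot" using \<open>F \<noteq> bot\<close> by (simp add: filtermap_bot_iff)
  then obtain L where "filtermap G F \<le> nhds L"
    using cauchy_filter_complete_converges[OF assms(1) complete_UNIV] by auto
  then show ?thesis using that unfolding filterlim_def by blast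
qed

lemma cauchy_filter_if_level_dichotomy:
  fixes G :: "'a \<Rightarrow> real"
  assumes bounded: "eventually (\<lambda>h. 0 \<le> G h \<and> G h \<le> B) F"
    and dichotomy: "\<And>j k. eventually (\<lambda>h. real (Suc j) / real (Suc k) \<le> G h) F \<or>
                          eventually (\<lambda>h. G h \<le> real (Suc (Suc j)) / real (Suc k)) F"
  shows "cauchy_filter (filtermap G F)"
proof -
  have "\<exists>P. eventually P F \<and> (\<forall>x y. P x \<and> P y \<longrightarrow> dist (G x) (G y) < e)" if "e > 0" for e
  proof -
    obtain k :: nat where k: "2 / e < real k" using reals_Archimedean2 by blast
    define K where "K = real (Suc k)"
    have K: "K > 0" "2 / K < e" using k \<open>e > 0\<close> by (auto simp: K_def field_simps)
    define J where "J = {..nat \<lceil>B * K\<rceil>}"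
    define Q where "Q j h \<longleftrightarrow>
      (if eventually (\<lambda>h. real (Suc j) / K \<le> G h) F then real (Suc j) / K \<le> G h
       else G h \<le> real (Suc (Suc j)) / K)" for j h
    define P where "P h \<longleftrightarrow> 0 \<le> G h \<and> G h \<le> B \<and> (\<forall>j\<in>J. Q j h)" for h
    have "eventually (\<lambda>h. Q j h) F" for j
      using dichotomy[of j k] unfolding Q_def K_def
      by (cases "eventually (\<lambda>h. real (Suc j) / real (Suc k) \<le> G h) F") auto
    then have "eventually (\<lambda>h. \<forall>j\<in>J. Q j h) F"
      by (intro eventually_ball_finite) (auto simp: J_def)
    with bounded have ev_P: "eventually P F"
      by eventually_elim (auto simp: P_def)
    have close: "G y \<le> G x + 2 / K" if "P x" "P y" for x y
    proof -
      \<comment> \<open>\<open>G x\<close> lies in \<open>[j / K, (j + 1) / K)\<close>, which rules out the lower alternative at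
        level \<open>j\<close>; the upper one then bounds \<open>G y\<close> by \<open>(j + 2) / K\<close>.\<close>
      define j where "j = nat \<lfloor>G x * K\<rfloor>"
      have j: "real j \<le> G x * K" "G x * K < real j + 1"
        using \<open>P x\<close> K(1) by (auto simp: j_def P_def)
      have "G x * K \<le> B * K" using \<open>P x\<close> K(1) by (auto simp: P_def intro: mult_right_mono)
      then have "\<lfloor>G x * K\<rfloor> \<le> \<lceil>B * K\<rceil>" by (meson floor_le_ceiling floor_mono order_trans)
      then have "j \<in> J" by (simp add: J_def j_def nat_mono)
      then have "Q j x" "Q j y" using that by (auto simp: P_def)
      moreover have "\<not> real (Suc j) / K \<le> G x" using j K(1) by (simp add: field_simps)
      ultimately have "G y \<le> real (Suc (Suc j)) / K" by (auto simp: Q_def split: if_splits)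
      then show ?thesis using j K(1) by (simp add: field_simps)
    qed
    show ?thesis
    proof (intro exI[of _ P] conjI allI impI)
      fix x y assume "P x \<and> P y"
      then have "G y \<le> G x + 2 / K" "G x \<le> G y + 2 / K" using close by auto
      then show "dist (G x) (G y) < e" using K(2) by (simp add: dist_real_def abs_less_iff)
    qed (rule ev_P)
  qed
  then show ?thesis by (simp add: cauchy_filter_metric_filtermap)
qed

lemma eventually_difference_quotient:
  fixes F :: "real \<Rightarrow> real"
  assumes "d > 0"
    and P: "\<And>c r. 0 < r \<Longrightarrow> r < d \<Longrightarrow> x \<in> cball c r \<Longrightarrow> P ((F (c + r) - F (c - r)) / (2 * r))"
  shows "eventually (\<lambda>h. P ((F (x + h) - F x) / h)) (at 0)"
  unfolding eventually_at
proof (intro exI[of _ "2 * d"] conjI ballI impI)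
  fix h :: real assume h: "h \<noteq> 0 \<and> dist h 0 < 2 * d"
  have "(F (x + h) - F x) / h = (F ((x + h / 2) + \<bar>h\<bar> / 2) - F ((x + h / 2) - \<bar>h\<bar> / 2)) / (2 * (\<bar>h\<bar> / 2))"
  proof (cases "h > 0")
    case True
    then have "x + h / 2 + \<bar>h\<bar> / 2 = x + h" "x + h / 2 - \<bar>h\<bar> / 2 = x" "2 * (\<bar>h\<bar> / 2) = h" by auto
    then show ?thesis by (simp only:)
  next
    case False
    with h have "x + h / 2 + \<bar>h\<bar> / 2 = x" "x + h / 2 - \<bar>h\<bar> / 2 = x + h" "2 * (\<bar>h\<bar> / 2) = - h" by auto
    then show ?thesis by (simp only:) (metis minus_diff_eq divide_minus_right minus_divide_left)
  qed
  moreover have "P ((F ((x + h / 2) + \<bar>h\<bar> / 2) - F ((x + h / 2) - \<bar>h\<bar> / 2)) / (2 * (\<bar>h\<bar> / 2)))"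
    using h by (intro P) (auto simp: dist_real_def)
  ultimately show "P ((F (x + h) - F x) / h)" by simp
qed (use \<open>d > 0\<close> in simp)

lemma eventually_difference_quotient_ge:
  fixes F :: "real \<Rightarrow> real"
  assumes "x \<notin> slope_below F p"
  shows "eventually (\<lambda>h. p \<le> (F (x + h) - F x) / h) (at 0)"
proof -
  obtain d where "d > 0"
    "\<forall>c r. 0 < r \<and> r < d \<and> x \<in> cball c r \<longrightarrow> \<not> F (c + r) - F (c - r) < p * (2 * r)"
    using assms unfolding slope_below_def by blast
  then show ?thesis by (intro eventually_difference_quotient) (auto simp: field_simps not_less)
qed

lemma eventually_difference_quotient_le:
  fixes F :: "real \<Rightarrow> real"
  assumes "x \<notin> slope_above F q"
  shows "eventually (\<lambda>h. (F (x + h) - F x) / h \<le> q) (at 0)"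
proof -
  obtain d where "d > 0"
    "\<forall>c r. 0 < r \<and> r < d \<and> x \<in> cball c r \<longrightarrow> \<not> q * (2 * r) < F (c + r) - F (c - r)"
    using assms unfolding slope_above_def by blast
  then show ?thesis by (intro eventually_difference_quotient) (auto simp: field_simps not_less)
qed

lemma mono_not_in_slope_below_0:
  fixes F :: "real \<Rightarrow> real"
  assumes "mono F"
  shows "x \<notin> slope_below F 0"
proof -
  have "\<not> F (c + r) - F (c - r) < 0" if "0 < r" for c r
    using assms that by (auto simp: not_less intro: monoD)
  then show ?thesis unfolding slope_below_def by (auto intro: exI[of _ 1])
qed

(* The ratios Suc j / Suc k run through the positive rationals.  Off the sets in the hypotheses
   the difference quotients at x are bounded and cannot oscillate across any rational gap, so
   they form a Cauchy net. *)
lemma differentiable_outside_slope_sets: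
  fixes F :: "real \<Rightarrow> real"
  assumes mono: "mono F" and bounded: "x \<notin> slope_above F (real n)"
    and gap: "\<And>j k. x \<notin> slope_below F (real (Suc j) / real (Suc k)) \<inter>
                        slope_above F (real (Suc (Suc j)) / real (Suc k))"
  shows "F differentiable (at x)"
proof -
  define G where "G h = (F (x + h) - F x) / h" for h
  have "eventually (\<lambda>h. 0 \<le> G h \<and> G h \<le> real n) (at 0)"
    using eventually_conj[OF eventually_difference_quotient_ge[OF mono_not_in_slope_below_0[OF mono]]
        eventually_difference_quotient_le[OF bounded]]
    unfolding G_def .
  moreover have "eventually (\<lambda>h. real (Suc j) / real (Suc k) \<le> G h) (at 0) \<or>
                 eventually (\<lambda>h. G h \<le> real (Suc (Suc j)) / real (Suc k)) (at 0)" for j k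
    using gap[of j k] eventually_difference_quotient_ge eventually_difference_quotient_le
    unfolding G_def by blast
  ultimately have "cauchy_filter (filtermap G (at 0))" by (rule cauchy_filter_if_level_dichotomy)
  then obtain L where "(G \<longlongrightarrow> L) (at 0)" using at_neq_bot by (rule tendsto_if_cauchy_filtermap)
  then have "(F has_real_derivative L) (at x)" unfolding DERIV_def G_def .
  then show ?thesis by (auto simp: differentiable_def has_field_derivative_def)
qed

theorem mono_differentiable_ae:
  fixes F :: "real \<Rightarrow> real"
  assumes mono: "mono F" and cont: "continuous_on UNIV F"
  shows "negligible {x. \<not> F differentiable (at x)}"
proof -
  define X where "X j k = slope_below F (real (Suc j) / real (Suc k)) \<inter>
                          slope_above F (real (Suc (Suc j)) / real (Suc k))"
    for j k :: nat
  have "{x. \<not> F differentiable (at x)} \<subseteq> (\<Union>j k. X j k) \<union> (\<Inter>n. slope_above F (real n))"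
  proof (rule subsetI, rule ccontr)
    fix x assume x: "x \<in> {x. \<not> F differentiable (at x)}" "x \<notin> (\<Union>j k. X j k) \<union> (\<Inter>n. slope_above F (real n))"
    then obtain n where "x \<notin> slope_above F (real n)" by auto
    then have "F differentiable (at x)"
      by (rule differentiable_outside_slope_sets[OF mono]) (use x(2) in \<open>auto simp: X_def\<close>)
    with x(1) show False by simp
  qed
  moreover have "negligible ((\<Union>j k. X j k) \<union> (\<Inter>n. slope_above F (real n)))"
  proof (rule negligible_on_intervals[THEN iffD2], intro allI)
    fix a b :: real
    have neg_X: "negligible (X j k \<inter> cbox a b)" for j k
      by (rule negligible_slope_below_Int_above[OF mono cont,
            of "real (Suc j) / real (Suc k)" "real (Suc (Suc j)) / real (Suc k)"])
         (auto simp: X_def divide_strict_right_mono bounded_Int)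
    have neg_UN_X: "negligible (\<Union>k. X j k \<inter> cbox a b)" for j
      by (rule negligible_countable_Union) (use neg_X in auto)
    have "negligible (\<Union>j k. X j k \<inter> cbox a b)"
      by (rule negligible_countable_Union) (use neg_UN_X in auto)
    moreover have "(\<Union>j k. X j k) \<inter> cbox a b = (\<Union>j k. X j k \<inter> cbox a b)" by blast
    ultimately have "negligible ((\<Union>j k. X j k) \<inter> cbox a b)" by simp
    moreover have "negligible ((\<Inter>n. slope_above F (real n)) \<inter> cbox a b)"
      by (rule negligible_slope_above_all[OF mono cont]) (auto simp: bounded_Int)
    ultimately show "negligible (((\<Union>j k. X j k) \<union> (\<Inter>n. slope_above F (real n))) \<inter> cbox a b)"
      by (simp add: Int_Un_distrib2)
  qed
  ultimately show ?thesis by (rule negligible_subset[rotated])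
qed

lemma integral_difference_quotient_le:
  fixes F :: "real \<Rightarrow> real"
  assumes mono: "mono F" and cont: "continuous_on UNIV F" and h: "0 < h" "h \<le> b - a" "h \<le> 1"
  shows "integral {a..b} (\<lambda>x. (F (x + h) - F x) / h) \<le> F (b + 1) - F a"
proof -
  have int_F: "F integrable_on {u..v}" for u v
    using cont by (intro integrable_continuous_real) (auto intro: continuous_on_subset)
  have int_shift: "(\<lambda>x. F (x + h)) integrable_on {u..v}" for u v
    using cont
      by (intro integrable_continuous_real continuous_on_compose2[OF cont]) (auto intro!: continuous_intros)
  have "integral {a..b} (\<lambda>x. F (x + h)) - integral {a..b} F
        = integral {b..b + h} F - integral {a..a + h} F"
  proof -
    have "integral {a..b} (\<lambda>x. F (x + h)) = integral {a + h..b + h} F"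
      using integral_shift_real_ivl[of "a + h" h "b + h" F] by simp
    also have "\<dots> = integral {a + h..b} F + integral {b..b + h} F"
      using h by (intro Henstock_Kurzweil_Integration.integral_combine[symmetric] int_F) auto
    moreover have "integral {a..b} F = integral {a..a + h} F + integral {a + h..b} F"
      using h by (intro Henstock_Kurzweil_Integration.integral_combine[symmetric] int_F) auto
    ultimately show ?thesis by linarith
  qed
  also have "\<dots> \<le> integral {b..b + h} (\<lambda>_. F (b + h)) - integral {a..a + h} (\<lambda>_. F a)"
    using mono by (intro diff_mono integral_le int_F) (auto simp: monoD)
  also have "\<dots> = h * (F (b + h) - F a)" using h by (simp add: algebra_simps)
  finally have "integral {a..b} (\<lambda>x. (F (x + h) - F x) / h) \<le> F (b + h) - F a"
    using h by (simp add: integral_diff int_F int_shift divide_le_eq mult.commute)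
  also have "\<dots> \<le> F (b + 1) - F a" using mono h by (simp add: monoD)
  finally show ?thesis .
qed

lemma integral_min_limit_le:
  fixes g :: "nat \<Rightarrow> 'a::euclidean_space \<Rightarrow> real"
  assumes S: "S \<in> lmeasurable" and "0 \<le> k"
    and g: "\<And>m. g m integrable_on S" "\<And>m x. x \<in> S \<Longrightarrow> 0 \<le> g m x"
    and lim: "\<And>x. x \<in> S \<Longrightarrow> (\<lambda>m. g m x) \<longlonglongrightarrow> D x"
    and bounded: "eventually (\<lambda>m. integral S (g m) \<le> C) sequentially"
  shows "(\<lambda>x. min (D x) k) integrable_on S" "integral S (\<lambda>x. min (D x) k) \<le> C"
proof -
  define \<psi> where "\<psi> m x = min (g m x) k" for m x
  have const_int: "(\<lambda>x. k) absolutely_integrable_on S"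
    using S by (simp add: absolutely_integrable_on_const)
  have "g m absolutely_integrable_on S" for m
    using g by (intro nonnegative_absolutely_integrable_1) auto
  then have \<psi>_int: "\<psi> m integrable_on S" for m
    unfolding \<psi>_def
      using const_int by (intro set_lebesgue_integral_eq_integral(1) absolutely_integrable_min_1)
  have \<psi>_bounded: "norm (\<psi> m x) \<le> k" if "x \<in> S" for m x
    using g(2)[OF that, of m] \<open>0 \<le> k\<close> by (simp add: \<psi>_def)
  have \<psi>_lim: "(\<lambda>m. \<psi> m x) \<longlonglongrightarrow> min (D x) k" if "x \<in> S" for x
    unfolding \<psi>_def using lim[OF that] by (intro tendsto_min tendsto_const)
  have dc: "(\<lambda>x. min (D x) k) integrable_on S" "(\<lambda>m. integral S (\<psi> m)) \<longlonglongrightarrow> integral S (\<lambda>x. min (D x) k)"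
    using dominated_convergence[OF \<psi>_int _ \<psi>_bounded \<psi>_lim] const_int
    by (auto dest: set_lebesgue_integral_eq_integral(1))
  then show "(\<lambda>x. min (D x) k) integrable_on S" by simp
  have "eventually (\<lambda>m. integral S (\<psi> m) \<le> C) sequentially"
    using bounded
  proof eventually_elim
    case (elim m)
    have "integral S (\<psi> m) \<le> integral S (g m)"
      using \<psi>_int g(1) by (intro integral_le) (auto simp: \<psi>_def)
    with elim show ?case by simp
  qed
  with dc(2) show "integral S (\<lambda>x. min (D x) k) \<le> C" by (intro tendsto_upperbound) auto
qed

lemma absolutely_integrable_limit_if_integrals_bounded:
  fixes g :: "nat \<Rightarrow> 'a::euclidean_space \<Rightarrow> real"
  assumes S: "S \<in> lmeasurable"
    and g: "\<And>m. g m integrable_on S" "\<And>m x. x \<in> S \<Longrightarrow> 0 \<le> g m x"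
    and lim: "\<And>x. x \<in> S \<Longrightarrow> (\<lambda>m. g m x) \<longlonglongrightarrow> D x"
    and bounded: "eventually (\<lambda>m. integral S (g m) \<le> C) sequentially"
  shows "D absolutely_integrable_on S"
proof -
  have D_nonneg: "0 \<le> D x" if "x \<in> S" for x
    using lim[OF that] g(2)[OF that] by (meson LIMSEQ_le_const)
  define \<phi> where "\<phi> k x = min (D x) (real k)" for k x
  have \<phi>: "\<phi> k integrable_on S" "integral S (\<phi> k) \<le> C" for k
    unfolding \<phi>_def using integral_min_limit_le[OF S _ g lim bounded] by auto
  have "D integrable_on S \<and> (\<lambda>k. integral S (\<phi> k)) \<longlonglongrightarrow> integral S D"
  proof (rule monotone_convergence_increasing)
    show "\<phi> k x \<le> \<phi> (Suc k) x" if "x \<in> S" for k x by (auto simp: \<phi>_def)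
    show "(\<lambda>k. \<phi> k x) \<longlonglongrightarrow> D x" if "x \<in> S" for x
    proof (rule tendsto_eventually)
      obtain K :: nat where "D x \<le> real K" using real_arch_simple by blast
      then show "\<forall>\<^sub>F k in sequentially. \<phi> k x = D x"
        unfolding eventually_sequentially \<phi>_def by (intro exI[of _ K]) auto
    qed
    have "0 \<le> integral S (\<phi> k)" for k
      using \<phi> D_nonneg by (intro integral_nonneg) (auto simp: \<phi>_def)
    then show "bounded (range (\<lambda>k. integral S (\<phi> k)))"
      unfolding bounded_real using \<phi> by (intro exI[of _ C]) auto
  qed (use \<phi> in auto)
  then show ?thesis
    using D_nonneg by (intro nonnegative_absolutely_integrable_1) auto
qed

lemma integral_Diff_negligible:
  fixes h :: "'a::euclidean_space \<Rightarrow> 'b::euclidean_space"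
  assumes "negligible M" "h integrable_on S"
  shows "h integrable_on (S - M)" "integral (S - M) h = integral S h"
proof -
  have "negligible {x \<in> S - (S - M). h x \<noteq> 0}" by (rule negligible_subset[OF assms(1)]) auto
  moreover have "negligible {x \<in> (S - M) - S. h x \<noteq> 0}"
    by (rule negligible_subset[OF negligible_empty]) auto
  ultimately show "h integrable_on (S - M)" "integral (S - M) h = integral S h"
    using integrable_spike_set[OF assms(2)] integral_spike_set by blast+
qed

lemma integral_le_sum_integrals_ae:
  fixes g :: "'a::euclidean_space \<Rightarrow> real" and f :: "'i \<Rightarrow> 'a \<Rightarrow> real"
  assumes "finite A" "negligible M" "g integrable_on S" "\<And>i. f i integrable_on S"
    and le: "\<And>t. t \<in> S - M \<Longrightarrow> g t \<le> (\<Sum>i\<in>A. f i t)"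
  shows "integral S g \<le> (\<Sum>i\<in>A. integral S (f i))"
proof -
  have "integral S g = integral (S - M) g" using integral_Diff_negligible[OF assms(2,3)] by simp
  also have "\<dots> \<le> integral (S - M) (\<lambda>t. \<Sum>i\<in>A. f i t)"
    using integral_Diff_negligible(1)[OF assms(2)] assms(1,3,4) le
    by (intro integral_le integrable_sum) auto
  also have "\<dots> = (\<Sum>i\<in>A. integral S (f i))"
    using integral_Diff_negligible[OF assms(2,4)] by (subst integral_sum) (auto simp: assms(1))
  finally show ?thesis .
qed

lemma absolutely_integrable_on_Diff_negligible:
  fixes h :: "'a::euclidean_space \<Rightarrow> 'b::euclidean_space"
  assumes "negligible M"
  shows "h absolutely_integrable_on (S - M) \<longleftrightarrow> h absolutely_integrable_on S"
  using assms by (intro absolutely_integrable_spike_set_eq) (auto intro: negligible_subset)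

theorem mono_derivative_absolutely_integrable:
  fixes F :: "real \<Rightarrow> real"
  assumes mono: "mono F" and cont: "continuous_on UNIV F" and ab: "a < b"
  shows "(\<lambda>x. vector_derivative F (at x)) absolutely_integrable_on {a..b}"
proof -
  define N where "N = {x. \<not> F differentiable (at x)}"
  have N: "negligible N" unfolding N_def by (rule mono_differentiable_ae[OF mono cont])
  define S where "S = {a..b} - N"
  have "S \<in> sets lebesgue" unfolding S_def using negligible_imp_sets[OF N] by (intro sets.Diff) auto
  then have S: "S \<in> lmeasurable"
    by (intro bounded_set_imp_lmeasurable) (auto simp: S_def intro: bounded_subset[of "{a..b}"])
  define e where "e m = inverse (real (Suc m))" for m
  define g where "g m x = (F (x + e m) - F x) / e m" for m x
  have e: "e m > 0" for m by (simp add: e_def)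
  have e_lim: "e \<longlonglongrightarrow> 0" unfolding e_def by (rule LIMSEQ_inverse_real_of_nat)
  have g_int: "g m integrable_on {a..b}" for m
    unfolding g_def using e[of m] cont
    by (intro integrable_continuous_real continuous_intros continuous_on_compose2[OF cont]) auto
  have "(\<lambda>x. vector_derivative F (at x)) absolutely_integrable_on S"
  proof (rule absolutely_integrable_limit_if_integrals_bounded[OF S])
    show "g m integrable_on S" for m unfolding S_def using integral_Diff_negligible[OF N g_int] by blast
    show "0 \<le> g m x" for m x using e[of m] mono by (simp add: g_def monoD)
    show "(\<lambda>m. g m x) \<longlonglongrightarrow> vector_derivative F (at x)" if "x \<in> S" for x
    proof -
      have "(F has_real_derivative vector_derivative F (at x)) (at x)"
        using that vector_derivative_works[of F "at x"]
        by (auto simp: S_def N_def has_real_derivative_iff_has_vector_derivative)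
      then show ?thesis
        unfolding g_def
          using e e_lim by (auto simp: DERIV_def LIMSEQ_SEQ_conv[symmetric] less_imp_neq[symmetric])
    qed
    have "min (b - a) 1 > 0" using ab by simp
    then have "eventually (\<lambda>m. e m < min (b - a) 1) sequentially"
      using e_lim unfolding order_tendsto_iff by blast
    then show "eventually (\<lambda>m. integral S (g m) \<le> F (b + 1) - F a) sequentially"
    proof eventually_elim
      case (elim m)
      then have "integral {a..b} (g m) \<le> F (b + 1) - F a"
        unfolding g_def using e[of m] by (intro integral_difference_quotient_le[OF mono cont]) auto
      then show ?case unfolding S_def using integral_Diff_negligible[OF N g_int] by simp
    qed
  qed
  then show ?thesis
    unfolding S_def using absolutely_integrable_on_Diff_negligible[OF N] by blast
qed

section \<open>Absolutely continuous functions\<close>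

definition nonoverlapping_intervals :: "real \<Rightarrow> real \<Rightarrow> nat \<Rightarrow> (nat \<Rightarrow> real \<times> real) \<Rightarrow> bool" where
  "nonoverlapping_intervals x y n I \<longleftrightarrow> (\<forall>k<n. x \<le> fst (I k) \<and> fst (I k) \<le> snd (I k) \<and> snd (I k) \<le> y) \<and>
     (\<forall>j<n. \<forall>k<n. j \<noteq> k \<longrightarrow> {fst (I j)<..<snd (I j)} \<inter> {fst (I k)<..<snd (I k)} = {})"

definition variation_sum :: "(real \<Rightarrow> 'a::real_normed_vector) \<Rightarrow> nat \<Rightarrow> (nat \<Rightarrow> real \<times> real) \<Rightarrow> real" where
  "variation_sum f n I = (\<Sum>k<n. norm (f (snd (I k)) - f (fst (I k))))"

definition length_sum :: "nat \<Rightarrow> (nat \<Rightarrow> real \<times> real) \<Rightarrow> real" where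
  "length_sum n I = (\<Sum>k<n. snd (I k) - fst (I k))"

lemma abs_cont_on_iff_sums:
  "abs_cont_on a b f \<longleftrightarrow>
     (\<forall>\<epsilon>>0. \<exists>\<delta>>0. \<forall>n I. nonoverlapping_intervals a b n I \<and> length_sum n I < \<delta> \<longrightarrow>
        variation_sum f n I < \<epsilon>)"
  unfolding abs_cont_on_def nonoverlapping_intervals_def length_sum_def variation_sum_def
    by (simp only: conj_assoc)

lemma nonoverlapping_intervals_shrink:
  assumes "nonoverlapping_intervals x y n I" "x' \<le> y'"
    and "\<And>k. k < n \<Longrightarrow> x' \<le> fst (J k) \<and> fst (J k) \<le> snd (J k) \<and> snd (J k) \<le> y'"
    and "\<And>k. k < n \<Longrightarrow> {fst (J k)<..<snd (J k)} \<subseteq> {fst (I k)<..<snd (I k)}"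
  shows "nonoverlapping_intervals x' y' n J"
proof -
  have d: "{fst (J j)<..<snd (J j)} \<inter> {fst (J k)<..<snd (J k)} = {}" if "j < n" "k < n" "j \<noteq> k" for j k
  proof -
    have "{fst (I j)<..<snd (I j)} \<inter> {fst (I k)<..<snd (I k)} = {}"
      using assms(1) that unfolding nonoverlapping_intervals_def by blast
    then show ?thesis using assms(4)[OF that(1)] assms(4)[OF that(2)] by blast
  qed
  show ?thesis unfolding nonoverlapping_intervals_def
  proof (intro conjI allI impI)
    fix k assume "k < n" then show "x' \<le> fst (J k)" "fst (J k) \<le> snd (J k)" "snd (J k) \<le> y'"
      using assms(3) by auto
  next
    fix j k assume "j < n" "k < n" "j \<noteq> k" then show "{fst (J j)<..<snd (J j)} \<inter> {fst (J k)<..<snd (J k)} = {}"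
      by (rule d)
  qed
qed

lemma length_sum_le:
  assumes "nonoverlapping_intervals x y n I" "x \<le> y"
  shows "length_sum n I \<le> y - x"
proof -
  define A where "A k = {fst (I k)<..<snd (I k)}" for k
  have le: "\<And>k. k < n \<Longrightarrow> fst (I k) \<le> snd (I k)"
    using assms(1) by (auto simp: nonoverlapping_intervals_def)
  have "length_sum n I = (\<Sum>k<n. measure lborel (A k))"
    unfolding length_sum_def A_def using le by (intro sum.cong) (auto simp: measure_lborel_Ioo)
  also have "\<dots> = measure lborel (\<Union>(A ` {..<n}))"
  proof (rule measure_finite_Union[symmetric])
    show "A ` {..<n} \<subseteq> sets lborel" by (auto simp: A_def)
    show "disjoint_family_on A {..<n}"
      using assms(1) by (auto simp: A_def disjoint_family_on_def nonoverlapping_intervals_def)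
  next
    fix k assume "k \<in> {..<n}" then show "emeasure lborel (A k) \<noteq> \<infinity>" using le by (simp add: A_def)
  qed simp
  also have "\<dots> \<le> measure lborel {x..y}"
  proof (rule measure_mono_fmeasurable)
    show "\<Union>(A ` {..<n}) \<subseteq> {x..y}" using assms(1) by (auto simp: A_def nonoverlapping_intervals_def)
    show "{x..y} \<in> fmeasurable lborel" by (simp add: fmeasurable_def emeasure_lborel_Icc_eq)
    show "\<Union>(A ` {..<n}) \<in> sets lborel" by (intro sets.finite_UN) (auto simp: A_def)
  qed
  also have "\<dots> = y - x" using assms(2) by simp
  finally show ?thesis .
qed

definition intervals_left :: "real \<Rightarrow> (nat \<Rightarrow> real \<times> real) \<Rightarrow> nat \<Rightarrow> real \<times> real" where
  "intervals_left c I k = (min (fst (I k)) c, min (snd (I k)) c)"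
definition intervals_right :: "real \<Rightarrow> (nat \<Rightarrow> real \<times> real) \<Rightarrow> nat \<Rightarrow> real \<times> real" where
  "intervals_right c I k = (max (fst (I k)) c, max (snd (I k)) c)"

lemma nonoverlapping_intervals_split:
  assumes "nonoverlapping_intervals x y n I" "x \<le> c" "c \<le> y"
  shows "nonoverlapping_intervals x c n (intervals_left c I)"
    and "nonoverlapping_intervals c y n (intervals_right c I)"
proof -
  have I: "x \<le> fst (I k) \<and> fst (I k) \<le> snd (I k) \<and> snd (I k) \<le> y" if "k < n" for k
    using assms(1) that unfolding nonoverlapping_intervals_def by blast
  show "nonoverlapping_intervals x c n (intervals_left c I)"
  proof (rule nonoverlapping_intervals_shrink[OF assms(1) assms(2)])
    fix k assume k: "k < n"
    have "min (fst (I k)) c \<le> min (snd (I k)) c" using I[OF k] by linarith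
    then show "x \<le> fst (intervals_left c I k) \<and> fst (intervals_left c I k) \<le> snd (intervals_left c I k) \<and>
               snd (intervals_left c I k) \<le> c"
      using I[OF k] assms(2) unfolding intervals_left_def by simp
    show "{fst (intervals_left c I k)<..<snd (intervals_left c I k)} \<subseteq> {fst (I k)<..<snd (I k)}"
    proof
      fix z assume "z \<in> {fst (intervals_left c I k)<..<snd (intervals_left c I k)}"
      then have "min (fst (I k)) c < z" "z < min (snd (I k)) c" by (simp_all add: intervals_left_def)
      then show "z \<in> {fst (I k)<..<snd (I k)}" by (auto simp: min_less_iff_disj)
    qed
  qed
  show "nonoverlapping_intervals c y n (intervals_right c I)"
  proof (rule nonoverlapping_intervals_shrink[OF assms(1) assms(3)])
    fix k assume k: "k < n"
    have "max (fst (I k)) c \<le> max (snd (I k)) c" using I[OF k] by linarith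
    then show "c \<le> fst (intervals_right c I k) \<and> fst (intervals_right c I k) \<le> snd (intervals_right c I k) \<and>
               snd (intervals_right c I k) \<le> y"
      using I[OF k] assms(3) unfolding intervals_right_def by simp
    show "{fst (intervals_right c I k)<..<snd (intervals_right c I k)} \<subseteq> {fst (I k)<..<snd (I k)}"
    proof
      fix z assume "z \<in> {fst (intervals_right c I k)<..<snd (intervals_right c I k)}"
      then have "max (fst (I k)) c < z" "z < max (snd (I k)) c" by (simp_all add: intervals_right_def)
      then show "z \<in> {fst (I k)<..<snd (I k)}" by (auto simp: less_max_iff_disj)
    qed
  qed
qed

lemma norm_diff_le_clip:
  fixes f :: "real \<Rightarrow> 'a::real_normed_vector"
  assumes "u \<le> v"
  shows "norm (f v - f u) \<le> norm (f (min v c) - f (min u c)) + norm (f (max v c) - f (max u c))"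
proof (cases "v \<le> c \<or> c \<le> u")
  case True
  then show ?thesis using assms by (auto simp: min_def max_def)
next
  case False
  then have "min u c = u" "min v c = c" "max u c = c" "max v c = v" by auto
  then show ?thesis using norm_triangle_ineq[of "f c - f u" "f v - f c"] by (simp add: add.commute)
qed

lemma variation_sum_split_le:
  fixes f :: "real \<Rightarrow> 'a::real_normed_vector"
  assumes "nonoverlapping_intervals x y n I"
  shows "variation_sum f n I \<le> variation_sum f n (intervals_left c I) + variation_sum f n (intervals_right c I)"
  unfolding variation_sum_def sum.distrib[symmetric] using assms
  by (intro sum_mono) (auto simp: intervals_left_def intervals_right_def nonoverlapping_intervals_def
      intro: norm_diff_le_clip)

lemma nonoverlapping_intervals_mono:
  "nonoverlapping_intervals x y n I \<Longrightarrow> x' \<le> x \<Longrightarrow> y \<le> y' \<Longrightarrow> nonoverlapping_intervals x' y' n I"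
  unfolding nonoverlapping_intervals_def by force

lemma variation_sum_degenerate:
  assumes "nonoverlapping_intervals a a n I"
  shows "variation_sum f n I = 0"
proof -
  have "\<And>k. k < n \<Longrightarrow> fst (I k) = a \<and> snd (I k) = a"
    using assms unfolding nonoverlapping_intervals_def by force
  then show ?thesis unfolding variation_sum_def by (intro sum.neutral) auto
qed

lemma abs_cont_on_bounded_variation:
  fixes f :: "real \<Rightarrow> 'a::real_normed_vector"
  assumes ac: "abs_cont_on a b f" and ab: "a \<le> b"
  shows "\<exists>B. \<forall>n I. nonoverlapping_intervals a b n I \<longrightarrow> variation_sum f n I \<le> B"
proof -
  obtain \<delta> where \<delta>: "\<delta> > 0"
    "\<And>n I. nonoverlapping_intervals a b n I \<Longrightarrow> length_sum n I < \<delta> \<Longrightarrow> variation_sum f n I < 1"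
    using ac unfolding abs_cont_on_iff_sums by (meson zero_less_one)
  have step: "variation_sum f n I \<le> variation_sum f n (intervals_left c I) + 1"
    if I: "nonoverlapping_intervals a y n I" and "a \<le> c" "c \<le> y" "y \<le> b" "y - c < \<delta>" for n I c y
  proof -
    have R: "nonoverlapping_intervals c y n (intervals_right c I)"
      using nonoverlapping_intervals_split(2)[OF I that(2,3)] .
    have "variation_sum f n (intervals_right c I) < 1"
    proof (rule \<delta>(2))
      show "nonoverlapping_intervals a b n (intervals_right c I)"
        using nonoverlapping_intervals_mono[OF R that(2,4)] .
      show "length_sum n (intervals_right c I) < \<delta>" using length_sum_le[OF R that(3)] that(5) by linarith
    qed
    then show ?thesis using variation_sum_split_le[OF I, of f c] by linarith
  qed
  have "variation_sum f n I \<le> real m"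
    if "nonoverlapping_intervals a y n I" "a \<le> y" "y \<le> b" "y \<le> a + real m * (\<delta> / 2)" for m n I y
    using that
  proof (induction m arbitrary: n I y)
    case 0
    then have "nonoverlapping_intervals a a n I" by (auto intro: nonoverlapping_intervals_mono)
    then show ?case by (simp add: variation_sum_degenerate)
  next
    case (Suc m)
    define c where "c = min y (a + real m * (\<delta> / 2))"
    have c: "a \<le> c" "c \<le> y" "y - c < \<delta>"
      using Suc.prems \<delta>(1) by (auto simp: c_def min_def field_simps)
    have "variation_sum f n (intervals_left c I) \<le> real m"
      using Suc.IH[OF nonoverlapping_intervals_split(1)[OF Suc.prems(1) c(1,2)]] c Suc.prems
      by (auto simp: c_def)
    with step[OF Suc.prems(1) c(1,2) Suc.prems(3) c(3)] show ?case by simp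
  qed
  moreover obtain m :: nat where "(b - a) / (\<delta> / 2) \<le> real m" using real_arch_simple by blast
  then have "b \<le> a + real m * (\<delta> / 2)" using \<delta>(1) by (simp add: field_simps)
  ultimately show ?thesis using ab by blast
qed

lemma nonoverlapping_intervals_extend:
  assumes I: "nonoverlapping_intervals a x n I" and "a \<le> x" "x \<le> y"
  shows "nonoverlapping_intervals a y (Suc n) (I(n := (x, y)))"
  unfolding nonoverlapping_intervals_def
proof (rule conjI; intro allI impI)
  fix k assume "k < Suc n"
  then show "a \<le> fst ((I(n := (x, y))) k) \<and> fst ((I(n := (x, y))) k) \<le> snd ((I(n := (x, y))) k) \<and>
             snd ((I(n := (x, y))) k) \<le> y"
    using assms by (cases "k = n") (auto simp: nonoverlapping_intervals_def less_Suc_eq)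
next
  fix j k assume jk: "j < Suc n" "k < Suc n" "j \<noteq> k"
  have left: "snd (I k) \<le> x" if "k < n" for k using I that by (auto simp: nonoverlapping_intervals_def)
  show "{fst ((I(n := (x, y))) j)<..<snd ((I(n := (x, y))) j)} \<inter>
        {fst ((I(n := (x, y))) k)<..<snd ((I(n := (x, y))) k)} = {}"
  proof (cases "j = n \<or> k = n")
    case True
    then show ?thesis using jk left[of j] left[of k] by auto
  next
    case False
    then show ?thesis using I jk by (auto simp: nonoverlapping_intervals_def)
  qed
qed

definition variation :: "(real \<Rightarrow> 'a::real_normed_vector) \<Rightarrow> real \<Rightarrow> real \<Rightarrow> real" where
  "variation f a x = Sup {variation_sum f n I | n I. nonoverlapping_intervals a x n I}"

locale abs_cont_function =
  fixes f :: "real \<Rightarrow> 'a::real_normed_vector" and a b :: real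
  assumes ac: "abs_cont_on a b f" and ab: "a \<le> b"
begin

lemma variation_bdd: "x \<le> b \<Longrightarrow> bdd_above {variation_sum f n I | n I. nonoverlapping_intervals a x n I}"
proof -
  assume x: "x \<le> b"
  obtain B where B: "\<And>n I. nonoverlapping_intervals a b n I \<Longrightarrow> variation_sum f n I \<le> B"
    using abs_cont_on_bounded_variation[OF ac ab] by blast
  show ?thesis by (rule bdd_aboveI[of _ B]) (use B nonoverlapping_intervals_mono x in blast)
qed

lemma variation_set_nonempty: "{variation_sum f n I | n I. nonoverlapping_intervals a x n I} \<noteq> {}"
proof -
  have "nonoverlapping_intervals a x 0 I" for I by (simp add: nonoverlapping_intervals_def)
  then show ?thesis by blast
qed

lemma variation_ge: "nonoverlapping_intervals a x n I \<Longrightarrow> x \<le> b \<Longrightarrow> variation_sum f n I \<le> variation f a x"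
  unfolding variation_def by (rule cSup_upper) (auto intro: variation_bdd)

lemma variation_le: "(\<And>n I. nonoverlapping_intervals a x n I \<Longrightarrow> variation_sum f n I \<le> M) \<Longrightarrow> variation f a x \<le> M"
  unfolding variation_def using variation_set_nonempty by (intro cSup_least) auto

lemma variation_add:
  assumes "a \<le> x" "x \<le> y" "y \<le> b"
  shows "variation f a x + norm (f y - f x) \<le> variation f a y"
proof -
  have "variation_sum f n I \<le> variation f a y - norm (f y - f x)" if "nonoverlapping_intervals a x n I" for n I
  proof -
    have "variation_sum f (Suc n) (I(n := (x, y))) \<le> variation f a y"
      using nonoverlapping_intervals_extend[OF that assms(1,2)] variation_ge assms by blast
    moreover have "variation_sum f (Suc n) (I(n := (x, y))) = variation_sum f n I + norm (f y - f x)"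
      unfolding variation_sum_def by simp
    ultimately show ?thesis by simp
  qed
  then have "variation f a x \<le> variation f a y - norm (f y - f x)" by (rule variation_le)
  then show ?thesis by simp
qed

lemma variation_mono: "a \<le> x \<Longrightarrow> x \<le> y \<Longrightarrow> y \<le> b \<Longrightarrow> variation f a x \<le> variation f a y"
  using variation_add[of x y] by (smt (verit) norm_ge_zero)

lemma variation_uniform_increment:
  assumes e: "e > 0"
  obtains d where "d > 0" "\<And>x y. a \<le> x \<Longrightarrow> x \<le> y \<Longrightarrow> y \<le> b \<Longrightarrow> y - x < d \<Longrightarrow> variation f a y \<le> variation f a x + e"
proof -
  obtain \<delta> where \<delta>: "\<delta> > 0" "\<And>n I. nonoverlapping_intervals a b n I \<Longrightarrow> length_sum n I < \<delta> \<Longrightarrow> variation_sum f n I < e"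
    using ac e unfolding abs_cont_on_iff_sums by meson
  have "variation f a y \<le> variation f a x + e" if xy: "a \<le> x" "x \<le> y" "y \<le> b" "y - x < \<delta>" for x y
  proof (rule variation_le)
    fix n I assume F: "nonoverlapping_intervals a y n I"
    have FL: "nonoverlapping_intervals a x n (intervals_left x I)" and FR: "nonoverlapping_intervals x y n (intervals_right x I)"
      using nonoverlapping_intervals_split[OF F xy(1,2)] by auto
    have "variation_sum f n (intervals_left x I) \<le> variation f a x" using variation_ge[OF FL] xy by simp
    moreover have "variation_sum f n (intervals_right x I) < e"
    proof (rule \<delta>(2))
      show "nonoverlapping_intervals a b n (intervals_right x I)"
        using nonoverlapping_intervals_mono[OF FR xy(1) xy(3)] .
      have "length_sum n (intervals_right x I) \<le> y - x" using length_sum_le[OF FR xy(2)] .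
      then show "length_sum n (intervals_right x I) < \<delta>" using xy by linarith
    qed
    moreover have "variation_sum f n I \<le> variation_sum f n (intervals_left x I) + variation_sum f n (intervals_right x I)"
      by (rule variation_sum_split_le[OF F])
    ultimately show "variation_sum f n I \<le> variation f a x + e" by simp
  qed
  then show ?thesis using that \<delta>(1) by blast
qed

lemma variation_continuous_on: "continuous_on {a..b} (variation f a)"
  unfolding continuous_on_iff
proof (intro ballI allI impI)
  fix x e assume x: "x \<in> {a..b}" and e: "(0::real) < e"
  obtain d where d: "d > 0" "\<And>x y. a \<le> x \<Longrightarrow> x \<le> y \<Longrightarrow> y \<le> b \<Longrightarrow> y - x < d \<Longrightarrow> variation f a y \<le> variation f a x + e / 2"
    using variation_uniform_increment[of "e/2"] e by auto
  show "\<exists>d>0. \<forall>x'\<in>{a..b}. dist x' x < d \<longrightarrow> dist (variation f a x') (variation f a x) < e"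
  proof (intro exI[of _ d] conjI ballI impI)
    fix y assume y: "y \<in> {a..b}" "dist y x < d"
    show "dist (variation f a y) (variation f a x) < e"
    proof (cases "x \<le> y")
      case True
      then have "variation f a y \<le> variation f a x + e / 2" "variation f a x \<le> variation f a y"
        using d(2)[of x y] variation_mono[of x y] x y by (auto simp: dist_real_def)
      then show ?thesis using e by (simp add: dist_real_def)
    next
      case False
      then have "variation f a x \<le> variation f a y + e / 2" "variation f a y \<le> variation f a x"
        using d(2)[of y x] variation_mono[of y x] x y by (auto simp: dist_real_def)
      then show ?thesis using e by (simp add: dist_real_def)
    qed
  qed (use d in auto)
qed

end

lemma abs_cont_on_imp_continuous_on:
  fixes f :: "real \<Rightarrow> 'a::real_normed_vector"
  assumes ac: "abs_cont_on a b f"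
  shows "continuous_on {a..b} f"
  unfolding continuous_on_iff
proof (intro ballI allI impI)
  fix x e assume x: "x \<in> {a..b}" and e: "(0::real) < e"
  obtain \<delta> where \<delta>: "\<delta> > 0" "\<And>n I. nonoverlapping_intervals a b n I \<Longrightarrow> length_sum n I < \<delta> \<Longrightarrow> variation_sum f n I < e"
    using ac e unfolding abs_cont_on_iff_sums by meson
  show "\<exists>d>0. \<forall>x'\<in>{a..b}. dist x' x < d \<longrightarrow> dist (f x') (f x) < e"
  proof (intro exI[of _ \<delta>] conjI ballI impI)
    fix y assume y: "y \<in> {a..b}" "dist y x < \<delta>"
    define I where "I = (\<lambda>_::nat. (min x y, max x y))"
    have "nonoverlapping_intervals a b 1 I" using x y by (auto simp: nonoverlapping_intervals_def I_def)
    moreover have "length_sum 1 I < \<delta>" using y by (auto simp: length_sum_def I_def dist_real_def)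
    ultimately have "variation_sum f 1 I < e" by (rule \<delta>(2))
    moreover have "variation_sum f 1 I = dist (f y) (f x)"
      by (cases "x \<le> y") (auto simp: variation_sum_def I_def dist_norm norm_minus_commute max_def min_def)
    ultimately show "dist (f y) (f x) < e" by simp
  qed (use \<delta> in auto)
qed

theorem abs_cont_on_mono_decomposition:
  fixes f :: "real \<Rightarrow> real"
  assumes ac: "abs_cont_on a b f" and ab: "a \<le> b"
  obtains F1 F2 where "mono F1" "continuous_on UNIV F1" "mono F2" "continuous_on UNIV F2"
    "\<And>x. x \<in> {a..b} \<Longrightarrow> f x = F1 x - F2 x"
proof -
  interpret abs_cont_function f a b using ac ab by unfold_locales
  define c where "c x = max a (min b x)" for x
  have c: "c x \<in> {a..b}" "x \<le> y \<Longrightarrow> c x \<le> c y" for x y using ab by (auto simp: c_def)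
  have c_cont: "continuous_on UNIV c" unfolding c_def by (intro continuous_intros)
  define F1 where "F1 x = variation f a (c x)" for x
  define F2 where "F2 x = variation f a (c x) - f (c x)" for x
  have "mono F1" unfolding F1_def using c by (intro monoI variation_mono) auto
  moreover have "mono F2"
  proof (rule monoI)
    fix x y :: real assume "x \<le> y"
    then have "variation f a (c x) + norm (f (c y) - f (c x)) \<le> variation f a (c y)"
      using c by (intro variation_add) auto
    then show "F2 x \<le> F2 y" unfolding F2_def by (simp add: abs_le_iff)
  qed
  moreover have F1_cont: "continuous_on UNIV F1"
    unfolding F1_def by (rule continuous_on_compose2[OF variation_continuous_on c_cont]) (use c in auto)
  moreover have "continuous_on UNIV (\<lambda>x. f (c x))"
    by (rule continuous_on_compose2[OF abs_cont_on_imp_continuous_on[OF ac] c_cont]) (use c in auto)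
  then have "continuous_on UNIV F2"
    unfolding F2_def using F1_cont unfolding F1_def by (intro continuous_on_diff)
  moreover have "f x = F1 x - F2 x" if "x \<in> {a..b}" for x using that by (simp add: F1_def F2_def c_def)
  ultimately show ?thesis using that by blast
qed

theorem abs_cont_on_real_derivative_ae:
  fixes f :: "real \<Rightarrow> real"
  assumes ac: "abs_cont_on a b f" and ab: "a < b"
  shows "\<exists>N. negligible N \<and> (\<forall>x\<in>{a..b} - N. (f has_real_derivative vector_derivative f (at x)) (at x)) \<and>
           (\<lambda>x. vector_derivative f (at x)) absolutely_integrable_on {a..b}"
proof -
  obtain F1 F2 where F: "mono F1" "continuous_on UNIV F1" "mono F2" "continuous_on UNIV F2"
      "\<And>x. x \<in> {a..b} \<Longrightarrow> f x = F1 x - F2 x"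
    using abs_cont_on_mono_decomposition[OF ac] ab by (metis less_imp_le)
  define N where "N = {a, b} \<union> {x. \<not> F1 differentiable (at x)} \<union> {x. \<not> F2 differentiable (at x)}"
  have negN: "negligible N" unfolding N_def
    using mono_differentiable_ae[OF F(1,2)] mono_differentiable_ae[OF F(3,4)]
      by (intro negligible_Un) auto
  define D where "D x = vector_derivative F1 (at x) - vector_derivative F2 (at x)" for x
  have der: "(f has_real_derivative D x) (at x)" if x: "x \<in> {a..b} - N" for x
  proof -
    have d1: "(F1 has_real_derivative vector_derivative F1 (at x)) (at x)"
      using x vector_derivative_works[of F1 "at x"]
        by (auto simp: N_def has_real_derivative_iff_has_vector_derivative)
    have d2: "(F2 has_real_derivative vector_derivative F2 (at x)) (at x)"
      using x vector_derivative_works[of F2 "at x"]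
        by (auto simp: N_def has_real_derivative_iff_has_vector_derivative)
    have "((\<lambda>t. F1 t - F2 t) has_real_derivative D x) (at x)" unfolding D_def
      by (intro derivative_intros d1 d2)
    then have "((\<lambda>t. F1 t - F2 t) has_derivative (*) (D x)) (at x)"
      by (simp add: has_field_derivative_def)
    then have "(f has_derivative (*) (D x)) (at x)"
    proof (rule has_derivative_transform_within_open)
      show "open {a<..<b}" by simp
      show "x \<in> {a<..<b}" using x by (auto simp: N_def)
      show "\<And>y. y \<in> {a<..<b} \<Longrightarrow> F1 y - F2 y = f y" using F(5) by auto
    qed
    then show ?thesis by (simp add: has_field_derivative_def)
  qed
  have vd: "vector_derivative f (at x) = D x" if "x \<in> {a..b} - N" for x
    using der[OF that] by (simp add: has_real_derivative_iff_has_vector_derivative vector_derivative_at)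
  have "D absolutely_integrable_on {a..b}"
    unfolding D_def
      using mono_derivative_absolutely_integrable[OF F(1,2) ab] mono_derivative_absolutely_integrable[OF F(3,4) ab] by (rule set_integral_diff(1))
  then have "(\<lambda>x. vector_derivative f (at x)) absolutely_integrable_on {a..b}"
    by (rule absolutely_integrable_spike[OF _ negN]) (use vd in auto)
  then show ?thesis using der vd negN by metis
qed

lemma abs_cont_on_Re_Im:
  fixes f :: "real \<Rightarrow> complex"
  assumes ac: "abs_cont_on a b f"
  shows "abs_cont_on a b (\<lambda>t. Re (f t))" "abs_cont_on a b (\<lambda>t. Im (f t))"
proof -
  have le1: "variation_sum (\<lambda>t. Re (f t)) n I \<le> variation_sum f n I" for n I
    unfolding variation_sum_def
      by (intro sum_mono) (metis minus_complex.simps(1) abs_Re_le_cmod real_norm_def)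
  have le2: "variation_sum (\<lambda>t. Im (f t)) n I \<le> variation_sum f n I" for n I
    unfolding variation_sum_def
      by (intro sum_mono) (metis minus_complex.simps(2) abs_Im_le_cmod real_norm_def)
  show "abs_cont_on a b (\<lambda>t. Re (f t))"
    using ac le1 unfolding abs_cont_on_iff_sums by (meson le_less_trans)
  show "abs_cont_on a b (\<lambda>t. Im (f t))"
    using ac le2 unfolding abs_cont_on_iff_sums by (meson le_less_trans)
qed

theorem abs_cont_on_complex_derivative_ae:
  fixes f :: "real \<Rightarrow> complex"
  assumes ac: "abs_cont_on a b f" and ab: "a < b"
  shows "\<exists>N. negligible N \<and> (\<forall>x\<in>{a..b} - N. (f has_vector_derivative vector_derivative f (at x)) (at x)) \<and>
           (\<lambda>x. vector_derivative f (at x)) absolutely_integrable_on {a..b}"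
proof -
  obtain N1 where N1: "negligible N1"
    "\<And>x. x \<in> {a..b} - N1 \<Longrightarrow>
      ((\<lambda>t. Re (f t)) has_real_derivative vector_derivative (\<lambda>t. Re (f t)) (at x)) (at x)"
    "(\<lambda>x. vector_derivative (\<lambda>t. Re (f t)) (at x)) absolutely_integrable_on {a..b}"
    using abs_cont_on_real_derivative_ae[OF abs_cont_on_Re_Im(1)[OF ac] ab] by blast
  obtain N2 where N2: "negligible N2"
    "\<And>x. x \<in> {a..b} - N2 \<Longrightarrow>
      ((\<lambda>t. Im (f t)) has_real_derivative vector_derivative (\<lambda>t. Im (f t)) (at x)) (at x)"
    "(\<lambda>x. vector_derivative (\<lambda>t. Im (f t)) (at x)) absolutely_integrable_on {a..b}"
    using abs_cont_on_real_derivative_ae[OF abs_cont_on_Re_Im(2)[OF ac] ab] by blast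
  define U where "U x = vector_derivative (\<lambda>t. Re (f t)) (at x)" for x
  define V where "V x = vector_derivative (\<lambda>t. Im (f t)) (at x)" for x
  define N where "N = N1 \<union> N2"
  have negN: "negligible N" using N1(1) N2(1) by (simp add: N_def)
  have der: "(f has_vector_derivative Complex (U x) (V x)) (at x)" if x: "x \<in> {a..b} - N" for x
    unfolding has_vector_derivative_complex_iff
      using N1(2)[of x] N2(2)[of x] x by (simp add: N_def U_def V_def)
  have vd: "vector_derivative f (at x) = Complex (U x) (V x)" if "x \<in> {a..b} - N" for x
    using der[OF that] by (rule vector_derivative_at)
  have eqf: "(\<lambda>x. Complex (U x) (V x)) = (\<lambda>x. U x *\<^sub>R 1 + V x *\<^sub>R \<i>)"
    by (auto simp: complex_eq_iff)
  have "(\<lambda>x. Complex (U x) (V x)) absolutely_integrable_on {a..b}"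
    unfolding eqf using N1(3) N2(3) unfolding U_def V_def
    by (intro set_integral_add(1) absolutely_integrable_scaleR_right)
  then have "(\<lambda>x. vector_derivative f (at x)) absolutely_integrable_on {a..b}"
    by (rule absolutely_integrable_spike[OF _ negN]) (use vd in auto)
  then show ?thesis using der vd negN by metis
qed

lemma abs_cont_on_if_variation_dominated:
  assumes "finite A" and ac: "\<And>i. i \<in> A \<Longrightarrow> abs_cont_on a b (f i)"
    and dominated: "\<And>n I. variation_sum g n I \<le> (\<Sum>i\<in>A. variation_sum (f i) n I)"
  shows "abs_cont_on a b g"
proof -
  have "\<forall>\<epsilon>>0. \<exists>\<delta>>0. \<forall>n I. nonoverlapping_intervals a b n I \<and> length_sum n I < \<delta> \<longrightarrow>
          (\<Sum>i\<in>A. variation_sum (f i) n I) < \<epsilon>"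
    using assms(1) ac
  proof (induction A rule: finite_induct)
    case empty
    then show ?case by (auto intro: exI[of _ 1])
  next
    case (insert j A)
    show ?case
    proof (intro allI impI)
      fix \<epsilon> :: real assume "\<epsilon> > 0"
      then have "\<epsilon> / 2 > 0" by simp
      obtain \<delta>1 where \<delta>1: "\<delta>1 > 0" "\<And>n I. nonoverlapping_intervals a b n I \<Longrightarrow> length_sum n I < \<delta>1 \<Longrightarrow>
          variation_sum (f j) n I < \<epsilon> / 2"
        using insert.prems[of j] \<open>\<epsilon> / 2 > 0\<close> unfolding abs_cont_on_iff_sums by blast
      obtain \<delta>2 where \<delta>2: "\<delta>2 > 0" "\<And>n I. nonoverlapping_intervals a b n I \<and> length_sum n I < \<delta>2 \<Longrightarrow>
          (\<Sum>i\<in>A. variation_sum (f i) n I) < \<epsilon> / 2"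
        using insert.IH insert.prems \<open>\<epsilon> / 2 > 0\<close> by blast
      show "\<exists>\<delta>>0. \<forall>n I. nonoverlapping_intervals a b n I \<and> length_sum n I < \<delta> \<longrightarrow>
              (\<Sum>i\<in>insert j A. variation_sum (f i) n I) < \<epsilon>"
      proof (intro exI[of _ "min \<delta>1 \<delta>2"] conjI allI impI)
        fix n I assume "nonoverlapping_intervals a b n I \<and> length_sum n I < min \<delta>1 \<delta>2"
        then have "variation_sum (f j) n I < \<epsilon> / 2" "(\<Sum>i\<in>A. variation_sum (f i) n I) < \<epsilon> / 2"
          using \<delta>1 \<delta>2 by auto
        then show "(\<Sum>i\<in>insert j A. variation_sum (f i) n I) < \<epsilon>" using insert.hyps by simp
      qed (use \<delta>1 \<delta>2 in auto)
    qed
  qed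
  then show ?thesis
    unfolding abs_cont_on_iff_sums using dominated by (meson le_less_trans)
qed

lemma norm_difference_quotient_tendsto:
  fixes f :: "real \<Rightarrow> 'a::real_normed_vector"
  assumes "(f has_vector_derivative D) (at t)"
  shows "((\<lambda>h. norm (f (t + h) - f t) / \<bar>h\<bar>) \<longlongrightarrow> norm D) (at 0)"
proof -
  have remainder: "(\<lambda>h. norm (f (t + h) - f t - h *\<^sub>R D) / norm h) \<midarrow>0\<rightarrow> 0"
    using assms unfolding has_vector_derivative_def has_derivative_at by blast
  have "norm (norm (f (t + h) - f t) / \<bar>h\<bar> - norm D) \<le> norm (f (t + h) - f t - h *\<^sub>R D) / norm h"
    if "h \<noteq> 0" for h
  proof -
    have "norm (f (t + h) - f t) / \<bar>h\<bar> - norm D = (norm (f (t + h) - f t) - norm (h *\<^sub>R D)) / \<bar>h\<bar>"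
      using that by (simp add: field_simps)
    moreover have "\<bar>norm (f (t + h) - f t) - norm (h *\<^sub>R D)\<bar> \<le> norm (f (t + h) - f t - h *\<^sub>R D)"
      by (rule norm_triangle_ineq3)
    ultimately show ?thesis by (simp add: abs_divide divide_right_mono)
  qed
  then have "eventually (\<lambda>h. norm (norm (f (t + h) - f t) / \<bar>h\<bar> - norm D) \<le>
      norm (f (t + h) - f t - h *\<^sub>R D) / norm h) (at 0)"
    by (auto simp: eventually_at_filter)
  from Lim_null_comparison[OF this remainder] show ?thesis by (rule LIM_zero_cancel)
qed

lemma norm_derivative_le_sum:
  fixes g :: "real \<Rightarrow> 'a::real_normed_vector" and f :: "'i \<Rightarrow> real \<Rightarrow> 'b::real_normed_vector"
  assumes "finite A" and dg: "(g has_vector_derivative Dg) (at t)"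
    and df: "\<And>i. i \<in> A \<Longrightarrow> (f i has_vector_derivative Df i) (at t)"
    and dominated: "\<And>s. norm (g s - g t) \<le> (\<Sum>i\<in>A. norm (f i s - f i t))"
  shows "norm Dg \<le> (\<Sum>i\<in>A. norm (Df i))"
proof (rule tendsto_le[OF at_neq_bot])
  show "((\<lambda>h. norm (g (t + h) - g t) / \<bar>h\<bar>) \<longlongrightarrow> norm Dg) (at 0)"
    by (rule norm_difference_quotient_tendsto[OF dg])
  show "((\<lambda>h. \<Sum>i\<in>A. norm (f i (t + h) - f i t) / \<bar>h\<bar>) \<longlongrightarrow> (\<Sum>i\<in>A. norm (Df i))) (at 0)"
    by (intro tendsto_sum norm_difference_quotient_tendsto df)
  show "\<forall>\<^sub>F h in at 0. norm (g (t + h) - g t) / \<bar>h\<bar> \<le> (\<Sum>i\<in>A. norm (f i (t + h) - f i t) / \<bar>h\<bar>)"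
    using dominated by (intro always_eventually allI) (simp add: divide_right_mono flip: sum_divide_distrib)
qed

section \<open>Absolute norms dominated by the l1 norm\<close>

lemma integral_norm_nonneg: "0 \<le> integral S (\<lambda>x. norm (f x))"
  by (cases "(\<lambda>x. norm (f x)) integrable_on S") (auto intro: integral_nonneg simp: not_integrable_integral)

lemma Ber_eq_integral_ratio:
  "Ber f = integral {0..2 * pi} (\<lambda>t. norm (vector_derivative f (at t)))
           / integral {0..2 * pi} (\<lambda>t. norm (f t))"
  by (simp add: Ber_def ET_def)

locale absolute_norm =
  fixes N :: "complex ^ 'n \<Rightarrow> real"
  assumes norm_zero: "\<And>x. N x = 0 \<longleftrightarrow> x = 0"
    and norm_hom: "\<And>c x. N (c *s x) = cmod c * N x"
    and norm_tri: "\<And>x y. N (x + y) \<le> N x + N y"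
    and norm_l1: "\<And>x. N x \<le> (\<Sum>i\<in>UNIV. cmod (x $ i))"
    and norm_abs: "\<And>x. N x = N (\<chi> i. complex_of_real (cmod (x $ i)))"
begin

lemma N_uminus: "N (- x) = N x"
  using norm_hom[of "-1" x] by (simp add: vector_smult_lneg)

lemma N_nonneg: "0 \<le> N x"
proof -
  have "N (x + - x) \<le> N x + N (- x)" by (rule norm_tri)
  moreover have "N 0 = 0" using norm_zero by simp
  ultimately have "0 \<le> N x + N x" using N_uminus by simp
  then show ?thesis by simp
qed

lemma N_diff_le: "N x - N y \<le> N (x - y)"
  using norm_tri[of "x - y" y] by simp

lemma N_Lipschitz_l1: "\<bar>N x - N y\<bar> \<le> (\<Sum>i\<in>UNIV. cmod (x $ i - y $ i))"
proof -
  have "N x - N y \<le> (\<Sum>i\<in>UNIV. cmod (x $ i - y $ i))" using N_diff_le[of x y] norm_l1[of "x - y"] by simp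
  moreover have "N y - N x \<le> (\<Sum>i\<in>UNIV. cmod (x $ i - y $ i))"
    using N_diff_le[of y x] norm_l1[of "y - x"] by (simp add: norm_minus_commute)
  ultimately show ?thesis by linarith
qed

lemma N_sum_le: "finite A \<Longrightarrow> N (\<Sum>a\<in>A. w a) \<le> (\<Sum>a\<in>A. N (w a))"
proof (induction A rule: finite_induct)
  case empty then show ?case using norm_zero[of 0] by simp
next
  case (insert x F)
  then show ?case using norm_tri[of "w x" "sum w F"] by simp
qed

lemma scaleR_eq_smult: "c *\<^sub>R (x :: complex ^ 'n) = complex_of_real c *s x"
  unfolding vec_eq_iff
proof (rule allI)
  fix i
  have "(c *\<^sub>R x) $ i = c *\<^sub>R (x $ i)" by simp
  also have "\<dots> = complex_of_real c * x $ i" by (simp add: scaleR_conv_of_real)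
  finally show "(c *\<^sub>R x) $ i = (complex_of_real c *s x) $ i" by simp
qed

lemma N_scaleR: "N (c *\<^sub>R x) = \<bar>c\<bar> * N x"
  by (simp add: scaleR_eq_smult norm_hom)

lemma N_le_card_norm: "N x \<le> real CARD('n) * norm x"
proof -
  have "N x \<le> (\<Sum>i\<in>UNIV. cmod (x $ i))" by (rule norm_l1)
  also have "\<dots> \<le> (\<Sum>i\<in>(UNIV::'n set). norm x)"
    by (intro sum_mono) (simp add: Finite_Cartesian_Product.norm_nth_le)
  also have "\<dots> = real CARD('n) * norm x" by simp
  finally show ?thesis .
qed

lemma N_nth_le: "cmod (x $ i) * N (axis i 1) \<le> N x"
proof -
  define y where "y = (\<chi> j. if j = i then x $ j else - (x $ j))"
  have "(\<chi> j. complex_of_real (cmod (y $ j))) = (\<chi> j. complex_of_real (cmod (x $ j)))"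
    by (simp add: vec_eq_iff y_def)
  then have Ny: "N y = N x" using norm_abs[of y] norm_abs[of x] by simp
  have "x + y = (2 * x $ i) *s axis i 1"
    by (simp add: vec_eq_iff y_def axis_def)
  then have "N (x + y) = 2 * cmod (x $ i) * N (axis i 1)" using norm_hom by (simp add: norm_mult)
  moreover have "N (x + y) \<le> N x + N y" by (rule norm_tri)
  ultimately show ?thesis using Ny by simp
qed

lemma N_axis_pos: "N (axis i 1) > 0"
proof -
  have "axis i (1::complex) \<noteq> 0" by (simp add: axis_eq_0_iff)
  then show ?thesis using norm_zero[of "axis i 1"] N_nonneg[of "axis i 1"] by linarith
qed

lemma continuous_on_N: "continuous_on S N"
proof -
  have "\<bar>N x - N y\<bar> \<le> real CARD('n) * dist x y" for x y
    using N_diff_le[of x y] N_diff_le[of y x] N_le_card_norm[of "x - y"] N_le_card_norm[of "y - x"]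
    by (auto simp: dist_norm norm_minus_commute abs_le_iff)
  then have "(real CARD('n))-lipschitz_on S N" by (intro lipschitz_onI) (auto simp: dist_real_def)
  then show ?thesis by (rule lipschitz_on_continuous_on)
qed

lemma N_of_real_pos:
  assumes "\<And>i. 0 < A i"
  shows "0 < N (\<chi> i. complex_of_real (A i))"
proof -
  have "(\<chi> i. complex_of_real (A i)) $ undefined \<noteq> 0" using assms[of undefined] by simp
  then have "(\<chi> i. complex_of_real (A i)) \<noteq> 0" by (metis zero_index)
  then show ?thesis using norm_zero N_nonneg by (metis less_eq_real_def)
qed

lemma N_integral_le:
  fixes v :: "real \<Rightarrow> complex ^ 'n"
  assumes v: "v integrable_on {a..b}" and nv: "(\<lambda>t. N (v t)) integrable_on {a..b}"
  shows "N (integral {a..b} v) \<le> integral {a..b} (\<lambda>t. N (v t))"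
proof (rule field_le_epsilon)
  \<comment> \<open>Compare the two integrals through one tagged division fine for both: \<open>N\<close> of a
    Riemann sum of \<open>v\<close> is at most the Riemann sum of \<open>N \<circ> v\<close>.\<close>
  fix e :: real assume e: "e > 0"
  define B where "B = real CARD('n)"
  have B0: "B \<ge> 0" by (simp add: B_def)
  define e1 where "e1 = e / (2 * (B + 1))"
  have e1: "e1 > 0" "B * e1 \<le> e / 2" using e B0 by (auto simp: e1_def field_simps)
  have ab: "{a..b} = cbox a b" by simp
  obtain \<gamma> where \<gamma>: "gauge \<gamma>"
      "\<And>\<D>. \<D> tagged_division_of cbox a b \<and> \<gamma> fine \<D> \<Longrightarrow>
        norm ((\<Sum>(x, k)\<in>\<D>. Henstock_Kurzweil_Integration.content k *\<^sub>R v x)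
              - integral (cbox a b) v) < e1"
    using integrable_integral[OF v[unfolded ab], unfolded has_integral[of v]] e1(1) by meson
  obtain \<delta> where \<delta>: "gauge \<delta>"
      "\<And>\<D>. \<D> tagged_division_of cbox a b \<and> \<delta> fine \<D> \<Longrightarrow>
        norm ((\<Sum>(x, k)\<in>\<D>. Henstock_Kurzweil_Integration.content k *\<^sub>R N (v x))
              - integral (cbox a b) (\<lambda>t. N (v t))) < e / 2"
    using integrable_integral[OF nv[unfolded ab], unfolded has_integral[of "\<lambda>t. N (v t)"]] e
    by (meson half_gt_zero)
  have "gauge (\<lambda>x. \<gamma> x \<inter> \<delta> x)" using \<gamma>(1) \<delta>(1) gauge_Int by blast
  then obtain \<D> where D: "\<D> tagged_division_of cbox a b" "(\<lambda>x. \<gamma> x \<inter> \<delta> x) fine \<D>"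
    using fine_division_exists by metis
  have "\<gamma> fine \<D>" "\<delta> fine \<D>" using fine_Int D(2) by blast+
  define Sv where "Sv = (\<Sum>(x, k)\<in>\<D>. Henstock_Kurzweil_Integration.content k *\<^sub>R v x)"
  define SN where "SN = (\<Sum>(x, k)\<in>\<D>. Henstock_Kurzweil_Integration.content k *\<^sub>R N (v x))"
  have fin: "finite \<D>" using D(1) by blast
  have "N Sv \<le> (\<Sum>p\<in>\<D>. N ((\<lambda>(x, k). Henstock_Kurzweil_Integration.content k *\<^sub>R v x) p))"
    unfolding Sv_def by (rule N_sum_le[OF fin])
  also have "\<dots> = SN" unfolding SN_def
    by (intro sum.cong) (auto simp: N_scaleR split_def)
  finally have NS: "N Sv \<le> SN" .
  have d1: "norm (Sv - integral {a..b} v) < e1" using \<gamma>(2)[of \<D>] D(1) \<open>\<gamma> fine \<D>\<close> by (simp add: Sv_def)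
  have d2: "\<bar>SN - integral {a..b} (\<lambda>t. N (v t))\<bar> < e / 2"
    using \<delta>(2)[of \<D>] D(1) \<open>\<delta> fine \<D>\<close> by (simp add: SN_def)
  have "N (integral {a..b} v) \<le> N Sv + N (integral {a..b} v - Sv)"
    using norm_tri[of Sv "integral {a..b} v - Sv"] by simp
  also have "N (integral {a..b} v - Sv) \<le> B * norm (integral {a..b} v - Sv)"
    using N_le_card_norm by (simp add: B_def)
  also have "\<dots> \<le> B * e1" using d1 B0 by (intro mult_left_mono) (auto simp: norm_minus_commute)
  finally show "N (integral {a..b} v) \<le> integral {a..b} (\<lambda>t. N (v t)) + e"
    using NS d2 e1(2) by linarith
qed


lemma abs_cont_on_N_comp:
  assumes "\<And>i. abs_cont_on a b (f i)"
  shows "abs_cont_on a b (\<lambda>t. N (\<chi> i. f i t))"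
proof (rule abs_cont_on_if_variation_dominated[of UNIV])
  fix n I
  have "variation_sum (\<lambda>t. N (\<chi> i. f i t)) n I \<le>
        (\<Sum>k<n. \<Sum>i\<in>UNIV. cmod (f i (snd (I k)) - f i (fst (I k))))"
    unfolding variation_sum_def real_norm_def
    using N_Lipschitz_l1[of "\<chi> i. f i (snd (I k))" "\<chi> i. f i (fst (I k))" for k] by (intro sum_mono) simp
  also have "\<dots> = (\<Sum>i\<in>UNIV. variation_sum (f i) n I)" unfolding variation_sum_def by (rule sum.swap)
  finally show "variation_sum (\<lambda>t. N (\<chi> i. f i t)) n I \<le> (\<Sum>i\<in>UNIV. variation_sum (f i) n I)" .
qed (use assms in auto)

lemma integral_derivative_N_comp_le:
  fixes f :: "'n \<Rightarrow> real \<Rightarrow> complex"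
  assumes ac: "\<And>i. abs_cont_on a b (f i)" and "a < b"
  shows "integral {a..b} (\<lambda>t. \<bar>vector_derivative (\<lambda>s. N (\<chi> i. f i s)) (at t)\<bar>)
           \<le> (\<Sum>i\<in>UNIV. integral {a..b} (\<lambda>t. cmod (vector_derivative (f i) (at t))))"
proof -
  define g where "g s = N (\<chi> i. f i s)" for s
  have "abs_cont_on a b g" unfolding g_def[abs_def] by (rule abs_cont_on_N_comp[OF ac])
  from abs_cont_on_real_derivative_ae[OF this \<open>a < b\<close>]
  obtain Ng where Ng: "negligible Ng"
      "\<And>t. t \<in> {a..b} - Ng \<Longrightarrow> (g has_real_derivative vector_derivative g (at t)) (at t)"
      "(\<lambda>t. vector_derivative g (at t)) absolutely_integrable_on {a..b}"
    by blast
  have "\<forall>i. \<exists>M. negligible M \<and>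
      (\<forall>t\<in>{a..b} - M. (f i has_vector_derivative vector_derivative (f i) (at t)) (at t)) \<and>
      (\<lambda>t. vector_derivative (f i) (at t)) absolutely_integrable_on {a..b}"
    using abs_cont_on_complex_derivative_ae[OF ac \<open>a < b\<close>] by blast
  then obtain Nf where Nf: "\<And>i. negligible (Nf i)"
      "\<And>i t. t \<in> {a..b} - Nf i \<Longrightarrow> (f i has_vector_derivative vector_derivative (f i) (at t)) (at t)"
      "\<And>i. (\<lambda>t. vector_derivative (f i) (at t)) absolutely_integrable_on {a..b}"
    by metis
  define M where "M = Ng \<union> (\<Union>i. Nf i)"
  have M: "negligible M" unfolding M_def
    using Ng(1) Nf(1) by (intro negligible_Un negligible_countable_Union) auto
  define dg where "dg t = \<bar>vector_derivative g (at t)\<bar>" for t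
  define df where "df i t = cmod (vector_derivative (f i) (at t))" for i t
  have int_dg: "dg integrable_on {a..b}" and int_df: "df i integrable_on {a..b}" for i
    using Ng(3) Nf(3) unfolding absolutely_integrable_on_def dg_def df_def by auto
  have pointwise: "dg t \<le> (\<Sum>i\<in>UNIV. df i t)" if "t \<in> {a..b} - M" for t
    unfolding dg_def df_def real_norm_def[symmetric]
  proof (rule norm_derivative_le_sum)
    show "(g has_vector_derivative vector_derivative g (at t)) (at t)"
      using that Ng(2) by (auto simp: M_def has_real_derivative_iff_has_vector_derivative)
    show "(f i has_vector_derivative vector_derivative (f i) (at t)) (at t)" if "i \<in> UNIV" for i
      using \<open>t \<in> {a..b} - M\<close> Nf(2) by (auto simp: M_def)
    show "norm (g s - g t) \<le> (\<Sum>i\<in>UNIV. norm (f i s - f i t))" for s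
      unfolding g_def using N_Lipschitz_l1[of "\<chi> i. f i s" "\<chi> i. f i t"] by simp
  qed simp
  have "integral {a..b} dg \<le> (\<Sum>i\<in>UNIV. integral {a..b} (df i))"
    by (rule integral_le_sum_integrals_ae[OF _ M int_dg int_df pointwise]) simp
  then show ?thesis unfolding dg_def df_def g_def .
qed

lemma N_integral_norm_le:
  fixes f :: "'n \<Rightarrow> real \<Rightarrow> complex"
  assumes cont: "\<And>i. continuous_on {a..b} (f i)"
  shows "N (\<chi> i. complex_of_real (integral {a..b} (\<lambda>t. cmod (f i t))))
           \<le> integral {a..b} (\<lambda>t. N (\<chi> i. f i t))"
proof -
  define v where "v t = (\<chi> i. complex_of_real (cmod (f i t)))" for t
  have int_v: "v integrable_on {a..b}"
    unfolding v_def by (intro integrable_continuous_real continuous_on_vec_lambda continuous_intros cont)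
  have N_v: "N (\<chi> i. f i t) = N (v t)" for t unfolding v_def by (subst norm_abs) simp
  have "integral {a..b} v $ i = complex_of_real (integral {a..b} (\<lambda>t. cmod (f i t)))" for i
  proof -
    have "integral {a..b} v $ i = integral {a..b} ((\<lambda>x. x $ i) \<circ> v)"
      by (rule integral_linear[OF int_v bounded_linear_vec_nth, symmetric])
    also have "\<dots> = integral {a..b} (complex_of_real \<circ> (\<lambda>t. cmod (f i t)))"
      by (simp add: v_def o_def)
    also have "\<dots> = complex_of_real (integral {a..b} (\<lambda>t. cmod (f i t)))"
      by (intro integral_linear bounded_linear_of_real integrable_continuous_real continuous_intros cont)
    finally show ?thesis .
  qed
  then have "(\<chi> i. complex_of_real (integral {a..b} (\<lambda>t. cmod (f i t)))) = integral {a..b} v"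
    by (simp add: vec_eq_iff)
  moreover have "(\<lambda>t. N (v t)) integrable_on {a..b}"
    unfolding v_def by (intro integrable_continuous_real continuous_on_compose2[OF continuous_on_N]
        continuous_on_vec_lambda continuous_intros cont) auto
  ultimately show ?thesis using N_integral_le[OF int_v] N_v by simp
qed

lemma inner_le_dual_norm:
  assumes "N w = 1"
  shows "cmod (\<Sum>i\<in>UNIV. v $ i * cnj (w $ i)) \<le> dual_norm N v"
  unfolding dual_norm_def
proof (rule cSup_upper)
  show "cmod (\<Sum>i\<in>UNIV. v $ i * cnj (w $ i)) \<in> {cmod (\<Sum>i\<in>UNIV. v $ i * cnj (w $ i)) | w. N w = 1}"
    using assms by blast
  show "bdd_above {cmod (\<Sum>i\<in>UNIV. v $ i * cnj (w $ i)) | w. N w = 1}"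
  proof (rule bdd_aboveI)
    fix y assume "y \<in> {cmod (\<Sum>i\<in>UNIV. v $ i * cnj (w $ i)) | w. N w = 1}"
    then obtain u where u: "N u = 1" "y = cmod (\<Sum>i\<in>UNIV. v $ i * cnj (u $ i))" by blast
    have "y \<le> (\<Sum>i\<in>UNIV. cmod (v $ i * cnj (u $ i)))" unfolding u(2) by (rule norm_sum)
    also have "\<dots> = (\<Sum>i\<in>UNIV. cmod (v $ i) * cmod (u $ i))" by (simp add: norm_mult)
    also have "\<dots> \<le> (\<Sum>i\<in>UNIV. cmod (v $ i) / N (axis i 1))"
    proof (rule sum_mono)
      fix i :: 'n
      have "cmod (u $ i) \<le> 1 / N (axis i 1)"
        using N_nth_le[of u i] u(1) N_axis_pos[of i] by (simp add: le_divide_eq)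
      then have "cmod (v $ i) * cmod (u $ i) \<le> cmod (v $ i) * (1 / N (axis i 1))"
        by (intro mult_left_mono) auto
      then show "cmod (v $ i) * cmod (u $ i) \<le> cmod (v $ i) / N (axis i 1)" by simp
    qed
    finally show "y \<le> (\<Sum>i\<in>UNIV. cmod (v $ i) / N (axis i 1))" .
  qed
qed

lemma sum_div_le_dual_norm:
  assumes A: "\<And>i. 0 < A i" and B: "\<And>i. 0 \<le> B i"
  shows "(\<Sum>i\<in>UNIV. B i) / N (\<chi> i. complex_of_real (A i))
           \<le> dual_norm N (\<chi> i. complex_of_real (B i / A i))"
proof -
  define a where "a = (\<chi> i. complex_of_real (A i))"
  have Na: "N a > 0" unfolding a_def using A by (rule N_of_real_pos)
  define w where "w = complex_of_real (1 / N a) *s a"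
  have "N w = 1" using Na by (simp add: w_def norm_hom norm_divide)
  have "(\<chi> i. complex_of_real (B i / A i)) $ i * cnj (w $ i) = complex_of_real (B i / N a)" for i
    using A[of i] by (simp add: w_def a_def)
  then have sum_eq: "(\<Sum>i\<in>UNIV. (\<chi> i. complex_of_real (B i / A i)) $ i * cnj (w $ i))
      = complex_of_real ((\<Sum>i\<in>UNIV. B i) / N a)"
    by (simp add: sum_divide_distrib)
  have "cmod (\<Sum>i\<in>UNIV. (\<chi> i. complex_of_real (B i / A i)) $ i * cnj (w $ i)) = (\<Sum>i\<in>UNIV. B i) / N a"
    unfolding sum_eq norm_of_real using B Na by (simp add: sum_nonneg)
  then show ?thesis
    unfolding a_def[symmetric]
    using inner_le_dual_norm[OF \<open>N w = 1\<close>, of "\<chi> i. complex_of_real (B i / A i)"] by linarith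
qed


lemma Ber_N_comp_le:
  fixes f :: "'n \<Rightarrow> real \<Rightarrow> complex"
  assumes ac: "\<And>i. abs_cont_on 0 (2 * pi) (f i)"
    and pos: "\<And>i. 0 < integral {0..2 * pi} (\<lambda>t. cmod (f i t))"
  shows "Ber (\<lambda>t. N (\<chi> i. f i t))
           \<le> (\<Sum>i\<in>UNIV. integral {0..2 * pi} (\<lambda>t. cmod (vector_derivative (f i) (at t))))
             / N (\<chi> i. complex_of_real (integral {0..2 * pi} (\<lambda>t. cmod (f i t))))"
    (is "_ \<le> ?S / N ?a")
proof -
  define G where "G = integral {0..2 * pi} (\<lambda>t. N (\<chi> i. f i t))"
  have jensen: "N ?a \<le> G" unfolding G_def by (intro N_integral_norm_le abs_cont_on_imp_continuous_on ac)
  have Na: "0 < N ?a" using pos by (rule N_of_real_pos)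
  have "Ber (\<lambda>t. N (\<chi> i. f i t))
        = integral {0..2 * pi} (\<lambda>t. \<bar>vector_derivative (\<lambda>s. N (\<chi> i. f i s)) (at t)\<bar>) / G"
    by (simp add: Ber_eq_integral_ratio G_def abs_of_nonneg[OF N_nonneg])
  also have "\<dots> \<le> ?S / G"
    using integral_derivative_N_comp_le[OF ac] jensen Na by (intro divide_right_mono) auto
  also have "\<dots> \<le> ?S / N ?a"
    using jensen Na by (intro divide_left_mono sum_nonneg integral_norm_nonneg) auto
  finally show ?thesis .
qed

end

theorem lemma2p6:
  fixes N :: "complex ^ 'n \<Rightarrow> real"
    and f :: "'n \<Rightarrow> real \<Rightarrow> complex"
  assumes norm_zero: "\<And>x. N x = 0 \<longleftrightarrow> x = 0"
    and norm_hom: "\<And>c x. N (c *s x) = cmod c * N x"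
    and norm_tri: "\<And>x y. N (x + y) \<le> N x + N y"
    and norm_diff: "\<And>x. x \<noteq> 0 \<Longrightarrow> N differentiable (at x)"
    and norm_l1: "\<And>x. N x \<le> (\<Sum>i\<in>UNIV. cmod (x $ i))"
    and norm_abs: "\<And>x. N x = N (\<chi> i. complex_of_real (cmod (x $ i)))"
    and ac: "\<And>i. abs_cont_T (f i)"
    and nonzero: "\<And>i. ET (\<lambda>t. cmod (f i t)) > 0"
  shows "Ber (\<lambda>t. N (\<chi> i. f i t))
           \<le> dual_norm N (\<chi> i. complex_of_real (Ber (f i)))"
proof -
  interpret absolute_norm N using norm_zero norm_hom norm_tri norm_l1 norm_abs by unfold_locales auto
  define A where "A i = integral {0..2 * pi} (\<lambda>t. cmod (f i t))" for i
  define D where "D i = integral {0..2 * pi} (\<lambda>t. cmod (vector_derivative (f i) (at t)))" for i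
  have ac': "abs_cont_on 0 (2 * pi) (f i)" for i using ac by (simp add: abs_cont_T_def)
  have A: "0 < A i" for i using nonzero[of i] by (simp add: ET_def A_def zero_less_divide_iff)
  have "Ber (\<lambda>t. N (\<chi> i. f i t)) \<le> (\<Sum>i\<in>UNIV. D i) / N (\<chi> i. complex_of_real (A i))"
    unfolding A_def D_def using A unfolding A_def by (rule Ber_N_comp_le[OF ac'])
  also have "\<dots> \<le> dual_norm N (\<chi> i. complex_of_real (D i / A i))"
    using A by (rule sum_div_le_dual_norm) (simp add: D_def integral_norm_nonneg)
  also have "(\<chi> i. complex_of_real (D i / A i)) = (\<chi> i. complex_of_real (Ber (f i)))"
    by (simp add: Ber_eq_integral_ratio A_def D_def)
  finally show ?thesis .
qed

end
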